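(* Let $H$ be a Hilbert space and let $A_1,\dots,A_n$ and $B_1,\dots,B_n$ be strictly positive bounded operators on $H$ with $\sum_{j=1}^n A_j=\sum_{j=1}^n B_j=I$. Then $$0\ \ge\ \sum_{j=1}^n A_j^{1/2}\left(\log A_j^{-1/2}B_jA_j^{-1/2}\right)A_j^{1/2}\ \ge\ -\log\Big[\sum_{j=1}^n A_jB_j^{-1}A_j\Big]$$ in the operator order.
   Context: A bounded operator $T$ on $H$ is positive ($T\ge 0$) if $(Tx,x)\ge 0$ for all $x\in H$, and strictly positive ($T>0$) if it is positive and invertible; $X\le Y$ means $Y-X\ge 0$. $I$ is the identity operator; $\log$ and powers of strictly positive operators are defined by continuous functional calculus. *)

theory Defs
  imports "HOL-Analysis.Analysis" "HOL-Computational_Algebra.Polynomial"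
begin

text \<open>Hilbert space: a complete real inner product space 'a.
  Bounded operators: blinfun from 'a to 'a, product = composition.\<close>

definition op_selfadjoint :: "('a::real_inner \<Rightarrow>\<^sub>L 'a) \<Rightarrow> bool" where
  "op_selfadjoint T \<longleftrightarrow> (\<forall>x y. inner (T x) y = inner x (T y))"

text \<open>Positive operator: (Tx,x) \<ge> 0 for all x (plus symmetry, automatic over the complex field).\<close>
definition op_pos :: "('a::real_inner \<Rightarrow>\<^sub>L 'a) \<Rightarrow> bool" where
  "op_pos T \<longleftrightarrow> op_selfadjoint T \<and> (\<forall>x. 0 \<le> inner (T x) x)"

definition op_le :: "('a::real_inner \<Rightarrow>\<^sub>L 'a) \<Rightarrow> ('a \<Rightarrow>\<^sub>L 'a) \<Rightarrow> bool" where
  "op_le X Y \<longleftrightarrow> op_pos (Y - X)"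

definition op_invertible :: "('a::real_normed_vector \<Rightarrow>\<^sub>L 'a) \<Rightarrow> bool" where
  "op_invertible T \<longleftrightarrow> (\<exists>S. S o\<^sub>L T = id_blinfun \<and> T o\<^sub>L S = id_blinfun)"

definition op_inv :: "('a::real_normed_vector \<Rightarrow>\<^sub>L 'a) \<Rightarrow> ('a \<Rightarrow>\<^sub>L 'a)" where
  "op_inv T = (THE S. S o\<^sub>L T = id_blinfun \<and> T o\<^sub>L S = id_blinfun)"

definition op_strictly_pos :: "('a::real_inner \<Rightarrow>\<^sub>L 'a) \<Rightarrow> bool" where
  "op_strictly_pos T \<longleftrightarrow> op_pos T \<and> op_invertible T"

definition op_spectrum :: "('a::real_normed_vector \<Rightarrow>\<^sub>L 'a) \<Rightarrow> real set" where
  "op_spectrum T = {l. \<not> op_invertible (T - l *\<^sub>R id_blinfun)}"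

definition op_power :: "('a::real_normed_vector \<Rightarrow>\<^sub>L 'a) \<Rightarrow> nat \<Rightarrow> ('a \<Rightarrow>\<^sub>L 'a)" where
  "op_power T k = ((\<lambda>S. T o\<^sub>L S) ^^ k) id_blinfun"

definition op_poly :: "real poly \<Rightarrow> ('a::real_normed_vector \<Rightarrow>\<^sub>L 'a) \<Rightarrow> ('a \<Rightarrow>\<^sub>L 'a)" where
  "op_poly p T = (\<Sum>i\<le>degree p. coeff p i *\<^sub>R op_power T i)"

definition op_fc :: "(real \<Rightarrow> real) \<Rightarrow> ('a::real_normed_vector \<Rightarrow>\<^sub>L 'a) \<Rightarrow> ('a \<Rightarrow>\<^sub>L 'a)" where
  "op_fc f T = (THE S. \<forall>P :: nat \<Rightarrow> real poly.
      uniform_limit (op_spectrum T) (\<lambda>k x. poly (P k) x) f sequentially \<longrightarrow>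
      ((\<lambda>k. op_poly (P k) T) \<longlonglongrightarrow> S))"

end

(*
  With C_j = A_j^(1/2) and X_j = A_j^(-1/2) B_j A_j^(-1/2) one has sum C_j C_j = I,
  sum C_j X_j C_j = sum B_j = I and sum C_j X_j^(-1) C_j = sum A_j B_j^(-1) A_j.  Both
  inequalities are therefore instances of Jensen's operator inequality
  sum C_j (ln X_j) C_j <= ln (sum C_j X_j C_j) for the operator concave logarithm, applied to the
  X_j and to their inverses (using ln (X^(-1)) = - ln X).

  Operator concavity of ln comes from ln t = integral over u in [0,1] of (t - 1) / (1 + u (t - 1)):
  the Riemann sums are positive combinations of (1 - (1 + u (t - 1))^(-1)) / u, which are operator
  concave because inversion is operator convex, and they converge uniformly on compact subsets of
  (0, infinity).  Uniform convergence on the spectrum passes to the operators because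
  norm (p T) <= max over the spectrum of T of |p| for real polynomials p and self-adjoint T, a
  consequence of the spectral mapping theorem for polynomials.
*)

theory Submission
  imports Defs "HOL-Computational_Algebra.Fundamental_Theorem_Algebra"
begin

section \<open>Self-adjoint operators, the operator order and inverses\<close>

interpretation blinfun_compose: bounded_bilinear blinfun_compose
  by (rule bounded_bilinear_blinfun_compose)

lemma blinfun_compose_assoc: "(A o\<^sub>L B) o\<^sub>L C = A o\<^sub>L (B o\<^sub>L C)"
  by (rule blinfun_eqI) simp

lemma blinfun_compose_id_left [simp]: "id_blinfun o\<^sub>L A = A"
  by (rule blinfun_eqI) simp

lemma blinfun_compose_id_right [simp]: "A o\<^sub>L id_blinfun = A"
  by (rule blinfun_eqI) simp

lemma blinfun_eq_0_trivial_space: "(\<forall>x::'a::real_normed_vector. x = 0) \<Longrightarrow> (T::'a \<Rightarrow>\<^sub>L 'a) = 0"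
  by (rule blinfun_eqI) simp

lemma op_selfadjointD: "op_selfadjoint T \<Longrightarrow> inner (T x) y = inner x (T y)"
  by (simp add: op_selfadjoint_def)

lemma op_selfadjoint_0 [simp]: "op_selfadjoint 0"
  by (simp add: op_selfadjoint_def)

lemma op_selfadjoint_id [simp]: "op_selfadjoint id_blinfun"
  by (simp add: op_selfadjoint_def)

lemma op_selfadjoint_add: "op_selfadjoint S \<Longrightarrow> op_selfadjoint T \<Longrightarrow> op_selfadjoint (S + T)"
  by (simp add: op_selfadjoint_def blinfun.bilinear_simps inner_add_left inner_add_right)

lemma op_selfadjoint_diff: "op_selfadjoint S \<Longrightarrow> op_selfadjoint T \<Longrightarrow> op_selfadjoint (S - T)"
  by (simp add: op_selfadjoint_def blinfun.bilinear_simps inner_diff_left inner_diff_right)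

lemma op_selfadjoint_uminus: "op_selfadjoint S \<Longrightarrow> op_selfadjoint (- S)"
  by (simp add: op_selfadjoint_def blinfun.bilinear_simps)

lemma op_selfadjoint_scaleR: "op_selfadjoint S \<Longrightarrow> op_selfadjoint (r *\<^sub>R S)"
  by (simp add: op_selfadjoint_def blinfun.bilinear_simps)

lemma op_selfadjoint_sum: "(\<And>i. i \<in> I \<Longrightarrow> op_selfadjoint (S i)) \<Longrightarrow> op_selfadjoint (\<Sum>i\<in>I. S i)"
  by (induct I rule: infinite_finite_induct) (auto intro: op_selfadjoint_add)

lemma op_selfadjoint_compose_commuting:
  assumes "op_selfadjoint S" "op_selfadjoint T" "S o\<^sub>L T = T o\<^sub>L S"
  shows "op_selfadjoint (S o\<^sub>L T)"
  unfolding op_selfadjoint_def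
proof (intro allI)
  fix x y
  have "inner ((S o\<^sub>L T) x) y = inner x ((T o\<^sub>L S) y)"
    using assms(1,2) by (simp add: op_selfadjointD)
  then show "inner ((S o\<^sub>L T) x) y = inner x ((S o\<^sub>L T) y)"
    by (simp add: assms(3))
qed

lemma op_selfadjoint_sandwich:
  "op_selfadjoint C \<Longrightarrow> op_selfadjoint X \<Longrightarrow> op_selfadjoint ((C o\<^sub>L X) o\<^sub>L C)"
  by (simp add: op_selfadjoint_def)

lemma inner_sandwich:
  assumes "op_selfadjoint C"
  shows "inner (((C o\<^sub>L Y) o\<^sub>L C) x) y = inner (Y (C x)) (C y)"
  using assms by (simp add: op_selfadjointD)

lemma op_selfadjoint_limit:
  assumes lim: "X \<longlonglongrightarrow> L" and sa: "\<And>n. op_selfadjoint (X n)"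
  shows "op_selfadjoint L"
  unfolding op_selfadjoint_def
proof (intro allI)
  fix x y
  have "(\<lambda>n. inner (X n x) y) \<longlonglongrightarrow> inner (L x) y"
    by (intro tendsto_intros blinfun.tendsto lim)
  moreover have "(\<lambda>n. inner (X n x) y) \<longlonglongrightarrow> inner x (L y)"
    unfolding op_selfadjointD[OF sa] by (intro tendsto_intros blinfun.tendsto lim)
  ultimately show "inner (L x) y = inner x (L y)"
    by (rule LIMSEQ_unique)
qed

lemma op_pos_sandwich: "op_selfadjoint C \<Longrightarrow> op_pos X \<Longrightarrow> op_pos ((C o\<^sub>L X) o\<^sub>L C)"
  by (simp add: op_pos_def op_selfadjoint_sandwich inner_sandwich
      del: blinfun_apply_blinfun_compose)

lemma op_le_iff: "op_le X Y \<longleftrightarrow> op_selfadjoint (Y - X) \<and> (\<forall>x. inner (X x) x \<le> inner (Y x) x)"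
  by (simp add: op_le_def op_pos_def blinfun.bilinear_simps inner_diff_left)

lemma op_le_refl: "op_le X X"
  by (simp add: op_le_iff)

lemma op_le_add: "op_le X Y \<Longrightarrow> op_le X' Y' \<Longrightarrow> op_le (X + X') (Y + Y')"
  unfolding op_le_def op_pos_def
  by (simp add: add_diff_add op_selfadjoint_add blinfun.bilinear_simps inner_add_left
      add_nonneg_nonneg)

lemma op_le_sum: "(\<And>i. i \<in> I \<Longrightarrow> op_le (X i) (Y i)) \<Longrightarrow> op_le (\<Sum>i\<in>I. X i) (\<Sum>i\<in>I. Y i)"
  by (induct I rule: infinite_finite_induct) (auto intro: op_le_add op_le_refl)

lemma op_le_scaleR: "op_le X Y \<Longrightarrow> 0 \<le> r \<Longrightarrow> op_le (r *\<^sub>R X) (r *\<^sub>R Y)"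
  unfolding op_le_def op_pos_def
  by (simp add: op_selfadjoint_scaleR blinfun.bilinear_simps flip: scaleR_diff_right)

lemma op_le_uminus: "op_le X Y \<Longrightarrow> op_le (- Y) (- X)"
  by (simp add: op_le_def)

lemma op_le_limit:
  assumes X: "X \<longlonglongrightarrow> L" and Y: "Y \<longlonglongrightarrow> M" and le: "\<And>n. op_le (X n) (Y n)"
  shows "op_le L M"
  unfolding op_le_iff
proof (intro conjI allI)
  have "(\<lambda>n. Y n - X n) \<longlonglongrightarrow> M - L"
    by (intro tendsto_diff X Y)
  moreover have "op_selfadjoint (Y n - X n)" for n
    using le[of n] by (simp add: op_le_iff)
  ultimately show "op_selfadjoint (M - L)"
    by (rule op_selfadjoint_limit)
  fix x
  have "(\<lambda>n. inner (X n x) x) \<longlonglongrightarrow> inner (L x) x" "(\<lambda>n. inner (Y n x) x) \<longlonglongrightarrow> inner (M x) x"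
    by (intro tendsto_intros blinfun.tendsto X Y)+
  moreover have "inner (X n x) x \<le> inner (Y n x) x" for n
    using le[of n] by (simp add: op_le_iff)
  ultimately show "inner (L x) x \<le> inner (M x) x"
    by (intro LIMSEQ_le) auto
qed

lemma op_inv_eqI:
  assumes ST: "S o\<^sub>L T = id_blinfun" and TS: "T o\<^sub>L S = id_blinfun"
  shows "op_inv T = S"
  unfolding op_inv_def
proof (rule the_equality)
  show "S o\<^sub>L T = id_blinfun \<and> T o\<^sub>L S = id_blinfun"
    using ST TS ..
  fix S' assume S': "S' o\<^sub>L T = id_blinfun \<and> T o\<^sub>L S' = id_blinfun"
  have "S' = S' o\<^sub>L (T o\<^sub>L S)"
    by (simp add: TS)
  also have "\<dots> = (S' o\<^sub>L T) o\<^sub>L S"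
    by (simp add: blinfun_compose_assoc)
  also have "\<dots> = S"
    using S' by simp
  finally show "S' = S" .
qed

lemma op_invertibleI: "S o\<^sub>L T = id_blinfun \<Longrightarrow> T o\<^sub>L S = id_blinfun \<Longrightarrow> op_invertible T"
  unfolding op_invertible_def by blast

lemma op_inv_compose:
  assumes "op_invertible T"
  shows "op_inv T o\<^sub>L T = id_blinfun" "T o\<^sub>L op_inv T = id_blinfun"
proof -
  obtain S where "S o\<^sub>L T = id_blinfun" "T o\<^sub>L S = id_blinfun"
    using assms unfolding op_invertible_def by blast
  moreover from this have "op_inv T = S"
    by (rule op_inv_eqI)
  ultimately show "op_inv T o\<^sub>L T = id_blinfun" "T o\<^sub>L op_inv T = id_blinfun"
    by simp_all
qed

lemma op_inv_apply [simp]: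
  assumes "op_invertible T"
  shows "op_inv T (T x) = x" "T (op_inv T x) = x"
  using arg_cong[OF op_inv_compose(1)[OF assms], of "\<lambda>F. F x"]
    arg_cong[OF op_inv_compose(2)[OF assms], of "\<lambda>F. F x"]
  by simp_all

lemma op_invertible_id [simp]: "op_invertible id_blinfun"
  by (rule op_invertibleI[of id_blinfun]) simp_all

lemma op_invertible_compose:
  assumes "op_invertible S" "op_invertible T"
  shows "op_invertible (S o\<^sub>L T)"
proof (rule op_invertibleI)
  show "(op_inv T o\<^sub>L op_inv S) o\<^sub>L (S o\<^sub>L T) = id_blinfun"
    by (rule blinfun_eqI) (simp add: assms)
  show "(S o\<^sub>L T) o\<^sub>L (op_inv T o\<^sub>L op_inv S) = id_blinfun"
    by (rule blinfun_eqI) (simp add: assms)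
qed

lemma op_invertible_scaleR:
  assumes "c \<noteq> 0" "op_invertible T"
  shows "op_invertible (c *\<^sub>R T)"
proof (rule op_invertibleI)
  show "(inverse c *\<^sub>R op_inv T) o\<^sub>L (c *\<^sub>R T) = id_blinfun"
    by (rule blinfun_eqI) (simp add: assms blinfun.bilinear_simps)
  show "(c *\<^sub>R T) o\<^sub>L (inverse c *\<^sub>R op_inv T) = id_blinfun"
    by (rule blinfun_eqI) (simp add: assms blinfun.bilinear_simps)
qed

lemma op_invertible_uminus: "op_invertible T \<Longrightarrow> op_invertible (- T)"
  using op_invertible_scaleR[of "-1" T] by simp

lemma op_invertible_op_inv: "op_invertible T \<Longrightarrow> op_invertible (op_inv T)"
  using op_inv_compose by (intro op_invertibleI)

lemma op_invertible_trivial_space: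
  "(\<forall>x::'a::real_normed_vector. x = 0) \<Longrightarrow> op_invertible (T::'a \<Rightarrow>\<^sub>L 'a)"
  by (rule op_invertibleI[of 0]) (simp_all add: blinfun_eq_0_trivial_space)

lemma op_selfadjoint_op_inv:
  assumes "op_selfadjoint T" "op_invertible T"
  shows "op_selfadjoint (op_inv T)"
  unfolding op_selfadjoint_def
proof (intro allI)
  fix x y
  have "inner (op_inv T x) y = inner (op_inv T x) (T (op_inv T y))"
    using assms(2) by simp
  also have "\<dots> = inner (T (op_inv T x)) (op_inv T y)"
    using assms(1) by (simp add: op_selfadjointD)
  also have "\<dots> = inner x (op_inv T y)"
    using assms(2) by simp
  finally show "inner (op_inv T x) y = inner x (op_inv T y)" .
qed

lemma op_inv_sandwich:
  assumes B: "op_invertible B" and SR: "S o\<^sub>L R = id_blinfun" and RS: "R o\<^sub>L S = id_blinfun"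
  shows "op_inv ((R o\<^sub>L B) o\<^sub>L R) = (S o\<^sub>L op_inv B) o\<^sub>L S"
proof -
  have SRx: "S (R x) = x" and RSx: "R (S x) = x" for x
    using SR RS by (metis blinfun_apply_blinfun_compose blinfun_apply_id_blinfun)+
  show ?thesis
    by (intro op_inv_eqI blinfun_eqI) (simp_all add: B SRx RSx)
qed

lemma op_strictly_pos_selfadjoint: "op_strictly_pos X \<Longrightarrow> op_selfadjoint X"
  by (simp add: op_strictly_pos_def op_pos_def)

lemma op_strictly_pos_sandwich:
  assumes "op_strictly_pos B" "op_selfadjoint R" "op_invertible R"
  shows "op_strictly_pos ((R o\<^sub>L B) o\<^sub>L R)"
  using assms op_pos_sandwich op_invertible_compose unfolding op_strictly_pos_def by blast

lemma op_strictly_pos_op_inv: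
  assumes "op_strictly_pos X"
  shows "op_strictly_pos (op_inv X)"
proof -
  have sa: "op_selfadjoint X" and inv: "op_invertible X" and pos: "\<And>y. 0 \<le> inner (X y) y"
    using assms by (auto simp: op_strictly_pos_def op_pos_def)
  have "inner (op_inv X x) x = inner (X (op_inv X x)) (op_inv X x)" for x
    using inv by (simp add: inner_commute)
  then have "0 \<le> inner (op_inv X x) x" for x
    using pos by simp
  then show ?thesis
    using inv sa
    by (simp add: op_strictly_pos_def op_pos_def op_selfadjoint_op_inv op_invertible_op_inv)
qed

section \<open>Quadratic forms, the Neumann series and the spectrum\<close>

definition op_lower_bound :: "('a::real_inner \<Rightarrow>\<^sub>L 'a) \<Rightarrow> real \<Rightarrow> bool" where
  "op_lower_bound X a \<longleftrightarrow> (\<forall>x. a * (norm x)^2 \<le> inner (X x) x)"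

lemma op_lower_boundD: "op_lower_bound X a \<Longrightarrow> a * (norm x)^2 \<le> inner (X x) x"
  by (simp add: op_lower_bound_def)

lemma op_lower_bound_mono: "op_lower_bound X a \<Longrightarrow> b \<le> a \<Longrightarrow> op_lower_bound X b"
  unfolding op_lower_bound_def by (meson mult_right_mono order_trans zero_le_power2)

lemma abs_inner_blinfun_le:
  fixes S :: "'a::real_inner \<Rightarrow>\<^sub>L 'a"
  shows "\<bar>inner (S x) x\<bar> \<le> norm S * (norm x)^2"
proof -
  have "\<bar>inner (S x) x\<bar> \<le> norm (S x) * norm x"
    by (rule Cauchy_Schwarz_ineq2)
  also have "\<dots> \<le> norm S * norm x * norm x"
    by (intro mult_right_mono norm_blinfun) simp
  finally show ?thesis
    by (simp add: power2_eq_square mult.assoc)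
qed

text \<open>By polarisation, testing \<open>S x\<close> against \<open>y = (\<parallel>x\<parallel> / \<parallel>S x\<parallel>) S x\<close>.\<close>

lemma norm_selfadjoint_le:
  assumes sa: "op_selfadjoint S" and K: "0 \<le> K" and bound: "\<And>x. \<bar>inner (S x) x\<bar> \<le> K * (norm x)^2"
  shows "norm S \<le> K"
proof (rule norm_blinfun_bound[OF K])
  fix x
  show "norm (S x) \<le> K * norm x"
  proof (cases "S x = 0")
    case True
    then show ?thesis using K by simp
  next
    case False
    then have nx: "0 < norm x"
      by (metis blinfun.zero_right zero_less_norm_iff)
    define y where "y = (norm x / norm (S x)) *\<^sub>R S x"
    have ny: "norm y = norm x"
      using False by (simp add: y_def)
    have Sxy: "inner (S x) y = norm x * norm (S x)"
      using False by (simp add: y_def power2_norm_eq_inner[symmetric] power2_eq_square)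
    have "4 * inner (S x) y = inner (S (x + y)) (x + y) - inner (S (x - y)) (x - y)"
      using op_selfadjointD[OF sa, of y x]
      by (simp add: blinfun.bilinear_simps inner_add_left inner_add_right inner_diff_left
          inner_diff_right inner_commute)
    also have "\<dots> \<le> K * (norm (x + y))^2 + K * (norm (x - y))^2"
      using bound[of "x + y"] bound[of "x - y"] by linarith
    also have "\<dots> = 2 * K * ((norm x)^2 + (norm y)^2)"
      by (simp add: power2_norm_eq_inner inner_add_left inner_add_right inner_diff_left
          inner_diff_right inner_commute algebra_simps)
    finally have "norm x * norm (S x) \<le> norm x * (K * norm x)"
      using Sxy ny by (simp add: power2_eq_square algebra_simps)
    then show ?thesis
      using nx by simp
  qed
qed

lemma discriminant_le_if_nonneg:
  fixes a b c :: real
  assumes c: "0 \<le> c" and nonneg: "\<And>t. 0 \<le> a + 2 * b * t + c * t^2"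
  shows "b^2 \<le> a * c"
proof (cases "c = 0")
  case True
  have "b = 0"
  proof (rule ccontr)
    assume "b \<noteq> 0"
    then have "2 * b * (- (\<bar>a\<bar> + 1) / (2 * b)) = - (\<bar>a\<bar> + 1)"
      by simp
    then show False
      using nonneg[of "- (\<bar>a\<bar> + 1) / (2 * b)"] True by (simp add: abs_if split: if_splits)
  qed
  then show ?thesis
    using True by simp
next
  case False
  then have "0 < c"
    using c by simp
  moreover have "0 \<le> a + 2 * b * (- b / c) + c * (- b / c)^2"
    by (rule nonneg)
  ultimately show ?thesis
    by (simp add: power2_eq_square field_simps)
qed

lemma op_pos_Cauchy_Schwarz:
  assumes "op_pos P"
  shows "(inner (P x) y)^2 \<le> inner (P x) x * inner (P y) y"
proof (rule discriminant_le_if_nonneg)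
  show "0 \<le> inner (P y) y"
    using assms by (simp add: op_pos_def)
  have sym: "inner (P y) x = inner (P x) y"
    using assms unfolding op_pos_def by (metis op_selfadjointD inner_commute)
  fix t
  have "0 \<le> inner (P (x + t *\<^sub>R y)) (x + t *\<^sub>R y)"
    using assms by (simp add: op_pos_def)
  also have "\<dots> = inner (P x) x + 2 * inner (P x) y * t + inner (P y) y * t^2"
    using sym by (simp add: blinfun.bilinear_simps inner_add_left inner_add_right algebra_simps
        power2_eq_square)
  finally show "0 \<le> inner (P x) x + 2 * inner (P x) y * t + inner (P y) y * t^2" .
qed

lemma op_pos_norm_apply_le:
  assumes pos: "op_pos P"
  shows "(norm (P x))^2 \<le> norm P * inner (P x) x"
proof (cases "P x = 0")
  case True
  then show ?thesis
    using pos by (simp add: op_pos_def)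
next
  case False
  have "(norm (P x))^2 * (norm (P x))^2 = (inner (P x) (P x))^2"
    unfolding power2_norm_eq_inner by (simp add: power2_eq_square)
  also have "\<dots> \<le> inner (P x) x * inner (P (P x)) (P x)"
    by (rule op_pos_Cauchy_Schwarz[OF pos])
  also have "\<dots> \<le> inner (P x) x * (norm P * (norm (P x))^2)"
    using pos abs_inner_blinfun_le[of P "P x"] by (intro mult_left_mono) (auto simp: op_pos_def)
  finally have "(norm (P x))^2 * (norm (P x))^2 \<le> (norm P * inner (P x) x) * (norm (P x))^2"
    by (simp add: ac_simps)
  then show ?thesis
    by (rule mult_right_le_imp_le) (use False in simp)
qed

lemma op_pos_invertible_lower_bound:
  assumes pos: "op_pos P" and inv: "op_invertible P"
  shows "op_lower_bound P (1 / ((norm (op_inv P))^2 * norm P + 1))"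
  unfolding op_lower_bound_def
proof
  fix x
  define k where "k = (norm (op_inv P))^2 * norm P"
  have "0 \<le> k" and q: "0 \<le> inner (P x) x"
    using pos by (auto simp: k_def op_pos_def)
  have "norm x \<le> norm (op_inv P) * norm (P x)"
    using norm_blinfun[of "op_inv P" "P x"] inv by simp
  then have "(norm x)^2 \<le> (norm (op_inv P))^2 * (norm (P x))^2"
    by (metis norm_ge_zero power_mono power_mult_distrib)
  also have "\<dots> \<le> (norm (op_inv P))^2 * (norm P * inner (P x) x)"
    using op_pos_norm_apply_le[OF pos] by (simp add: mult_left_mono)
  also have "\<dots> \<le> (k + 1) * inner (P x) x"
    using q by (simp add: k_def algebra_simps)
  finally have "(norm x)^2 \<le> (k + 1) * inner (P x) x" .
  moreover have "0 < k + 1"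
    using \<open>0 \<le> k\<close> by simp
  ultimately show "1 / ((norm (op_inv P))^2 * norm P + 1) * (norm x)^2 \<le> inner (P x) x"
    unfolding k_def[symmetric] by (simp add: field_simps)
qed

lemma Cauchy_partial_sums_if_summable_norm:
  fixes f :: "nat \<Rightarrow> 'a::real_normed_vector"
  assumes "summable (\<lambda>n. norm (f n))"
  shows "Cauchy (\<lambda>N. \<Sum>n<N. f n)"
proof (rule CauchyI)
  fix e :: real assume "0 < e"
  then obtain M where M: "\<And>m n. M \<le> m \<Longrightarrow> norm (\<Sum>k\<in>{m..<n}. norm (f k)) < e"
    using assms unfolding summable_Cauchy by blast
  have close: "norm ((\<Sum>k<m. f k) - (\<Sum>k<n. f k)) < e" if "M \<le> n" "n \<le> m" for m n
  proof -
    have "(\<Sum>k<m. f k) - (\<Sum>k<n. f k) = (\<Sum>k\<in>{n..<m}. f k)"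
      using that(2) by (metis sum_diff_nat_ivl lessThan_atLeast0 zero_le)
    then have "norm ((\<Sum>k<m. f k) - (\<Sum>k<n. f k)) \<le> (\<Sum>k\<in>{n..<m}. norm (f k))"
      by (simp add: norm_sum)
    also have "\<dots> < e"
      using M[OF that(1), of m] by (simp add: sum_nonneg)
    finally show ?thesis .
  qed
  show "\<exists>M. \<forall>m\<ge>M. \<forall>n\<ge>M. norm ((\<Sum>k<m. f k) - (\<Sum>k<n. f k)) < e"
  proof (intro exI allI impI)
    fix m n assume "M \<le> m" "M \<le> n"
    then show "norm ((\<Sum>k<m. f k) - (\<Sum>k<n. f k)) < e"
      using close[of n m] close[of m n] by (cases "n \<le> m") (auto simp: norm_minus_commute)
  qed
qed

lemma bounded_linear_pointwise_limit:
  fixes X :: "nat \<Rightarrow> 'a::real_normed_vector \<Rightarrow>\<^sub>L 'b::real_normed_vector"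
  assumes v: "\<And>x. (\<lambda>n. X n x) \<longlonglongrightarrow> v x" and K: "\<And>n. norm (X n) \<le> K"
  shows "bounded_linear v"
proof -
  have "norm (v x) \<le> K * norm x" for x
  proof (rule LIMSEQ_le_const2)
    show "(\<lambda>n. norm (X n x)) \<longlonglongrightarrow> norm (v x)"
      by (intro tendsto_norm v)
    have "norm (X n x) \<le> K * norm x" for n
      using norm_blinfun[of "X n" x] mult_right_mono[OF K[of n] norm_ge_zero[of x]] by linarith
    then show "\<exists>N. \<forall>n\<ge>N. norm (X n x) \<le> K * norm x"
      by blast
  qed
  then show ?thesis
  proof (unfold_locales)
    fix x y and r :: real
    have "(\<lambda>n. X n (x + y)) \<longlonglongrightarrow> v x + v y" "(\<lambda>n. X n (r *\<^sub>R x)) \<longlonglongrightarrow> r *\<^sub>R v x"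
      unfolding blinfun.bilinear_simps by (intro tendsto_intros v)+
    then show "v (x + y) = v x + v y" "v (r *\<^sub>R x) = r *\<^sub>R v x"
      using v LIMSEQ_unique by blast+
  qed (auto simp: mult.commute)
qed

text \<open>The library proves completeness of \<^typ>\<open>'a \<Rightarrow>\<^sub>L 'b\<close> only for \<^class>\<open>banach\<close>
  codomains, which a type of sort \<open>{real_inner, complete_space}\<close> is not known to be.\<close>

lemma convergent_blinfun_if_Cauchy:
  fixes X :: "nat \<Rightarrow> 'a::real_normed_vector \<Rightarrow>\<^sub>L 'b::{real_normed_vector,complete_space}"
  assumes X: "Cauchy X"
  shows "convergent X"
proof -
  have "Cauchy (\<lambda>n. X n x)" for x
    by (rule bounded_linear.Cauchy[OF blinfun.bounded_linear_left X])
  then obtain v where v: "\<And>x. (\<lambda>n. X n x) \<longlonglongrightarrow> v x"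
    unfolding Cauchy_convergent_iff convergent_def by metis
  obtain K where "\<And>n. norm (X n) \<le> K"
    using Cauchy_Bseq[OF X] unfolding Bseq_def by blast
  with v have "bounded_linear v"
    by (rule bounded_linear_pointwise_limit)
  then have Xv: "\<And>x. (\<lambda>n. X n x) \<longlonglongrightarrow> Blinfun v x"
    using v by (simp add: bounded_linear_Blinfun_apply)
  have "X \<longlonglongrightarrow> Blinfun v"
  proof (rule LIMSEQ_I)
    fix e :: real assume "0 < e"
    then obtain M where M: "\<And>m n. M \<le> m \<Longrightarrow> M \<le> n \<Longrightarrow> norm (X m - X n) < e / 2"
      using CauchyD[OF X, of "e / 2"] by auto
    have "norm (X n - Blinfun v) \<le> e / 2" if n: "M \<le> n" for n
    proof (rule norm_blinfun_bound)
      show "0 \<le> e / 2"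
        using \<open>0 < e\<close> by simp
      fix x
      show "norm ((X n - Blinfun v) x) \<le> e / 2 * norm x"
      proof (rule LIMSEQ_le_const2)
        show "(\<lambda>m. norm (X n x - X m x)) \<longlonglongrightarrow> norm ((X n - Blinfun v) x)"
          unfolding blinfun.bilinear_simps by (intro tendsto_intros Xv)
        have "norm (X n x - X m x) \<le> e / 2 * norm x" if "M \<le> m" for m
        proof -
          have "norm (X n x - X m x) \<le> norm (X n - X m) * norm x"
            using norm_blinfun[of "X n - X m" x] by (simp add: blinfun.bilinear_simps)
          also have "\<dots> \<le> e / 2 * norm x"
            using M[OF n that] by (intro mult_right_mono) auto
          finally show ?thesis .
        qed
        then show "\<exists>N. \<forall>m\<ge>N. norm (X n x - X m x) \<le> e / 2 * norm x"
          by blast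
      qed
    qed
    then show "\<exists>M. \<forall>n\<ge>M. norm (X n - Blinfun v) < e"
      using \<open>0 < e\<close> by (intro exI[of _ M]) (auto intro: le_less_trans[of _ "e / 2"])
  qed
  then show ?thesis
    by (rule convergentI)
qed

lemma op_power_0 [simp]: "op_power R 0 = id_blinfun"
  by (simp add: op_power_def)

lemma op_power_Suc: "op_power R (Suc n) = R o\<^sub>L op_power R n"
  by (simp add: op_power_def)

lemma op_power_commute: "op_power R n o\<^sub>L R = R o\<^sub>L op_power R n"
  by (induct n) (simp_all add: op_power_Suc blinfun_compose_assoc)

lemma norm_op_power_le: "norm (op_power R n) \<le> (norm R)^n"
proof (induct n)
  case 0
  then show ?case by (simp add: norm_blinfun_id_le)
next
  case (Suc n)
  have "norm (op_power R (Suc n)) \<le> norm R * norm (op_power R n)"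
    by (simp add: op_power_Suc norm_blinfun_compose)
  also have "\<dots> \<le> norm R * (norm R)^n"
    using Suc by (simp add: mult_left_mono)
  finally show ?case by simp
qed

lemma op_invertible_near_id:
  fixes S :: "'a::{real_normed_vector,complete_space} \<Rightarrow>\<^sub>L 'a"
  assumes "norm (id_blinfun - S) < 1"
  shows "op_invertible S"
proof -
  define R where "R = id_blinfun - S"
  define Q where "Q N = (\<Sum>n<N. op_power R n)" for N
  have R: "norm R < 1"
    using assms by (simp add: R_def)
  have "summable (\<lambda>n. norm (op_power R n))"
    by (rule summable_comparison_test[of _ "\<lambda>n. norm R ^ n"])
      (use R in \<open>auto simp: norm_op_power_le summable_geometric\<close>)
  then obtain L where Q: "Q \<longlonglongrightarrow> L"
    using convergent_blinfun_if_Cauchy[OF Cauchy_partial_sums_if_summable_norm]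
    unfolding Q_def convergent_def by blast
  have R0: "op_power R \<longlonglongrightarrow> 0"
    by (rule Lim_null_comparison[of _ "\<lambda>n. norm R ^ n"])
      (use R in \<open>auto simp: norm_op_power_le LIMSEQ_power_zero\<close>)
  have tel: "(\<Sum>n<N. op_power R n - op_power R (Suc n)) = id_blinfun - op_power R N" for N
    by (simp add: sum_lessThan_telescope')
  have S: "S = id_blinfun - R"
    by (simp add: R_def)
  have "S o\<^sub>L Q N = id_blinfun - op_power R N" "Q N o\<^sub>L S = id_blinfun - op_power R N" for N
    unfolding tel[symmetric]
    by (simp_all add: S Q_def sum_subtractf blinfun_compose.diff_left blinfun_compose.diff_right
        blinfun_compose.sum_left blinfun_compose.sum_right op_power_Suc op_power_commute)
  moreover have "(\<lambda>N. id_blinfun - op_power R N) \<longlonglongrightarrow> id_blinfun"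
    using tendsto_diff[OF tendsto_const R0] by simp
  ultimately have "(\<lambda>N. S o\<^sub>L Q N) \<longlonglongrightarrow> id_blinfun" "(\<lambda>N. Q N o\<^sub>L S) \<longlonglongrightarrow> id_blinfun"
    by simp_all
  moreover have "(\<lambda>N. S o\<^sub>L Q N) \<longlonglongrightarrow> (S o\<^sub>L L)" "(\<lambda>N. Q N o\<^sub>L S) \<longlonglongrightarrow> (L o\<^sub>L S)"
    by (intro blinfun_compose.tendsto tendsto_const Q)+
  ultimately show ?thesis
    by (metis LIMSEQ_unique op_invertibleI)
qed

text \<open>Rescaled to norm at most one, \<open>S\<close> lies within distance \<open>1 - k c < 1\<close> of the identity.\<close>

lemma op_lower_bound_invertible:
  fixes S :: "'a::{real_inner,complete_space} \<Rightarrow>\<^sub>L 'a"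
  assumes sa: "op_selfadjoint S" and lb: "op_lower_bound S c" and c: "0 < c"
  shows "op_invertible S"
proof -
  define k where "k = 1 / max (norm S) c"
  have k: "0 < k" "k * c \<le> 1" "k * norm S \<le> 1"
    using c by (auto simp: k_def field_simps)
  define R where "R = id_blinfun - k *\<^sub>R S"
  have R: "inner (R x) x = (norm x)^2 - k * inner (S x) x" for x
    by (simp add: R_def blinfun.bilinear_simps inner_diff_left power2_norm_eq_inner)
  have "norm R \<le> 1 - k * c"
  proof (rule norm_selfadjoint_le)
    show "op_selfadjoint R"
      unfolding R_def by (intro op_selfadjoint_diff op_selfadjoint_id op_selfadjoint_scaleR sa)
    show "0 \<le> 1 - k * c"
      using k by simp
    fix x
    have "k * inner (S x) x \<le> k * (norm S * (norm x)^2)"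
      using abs_inner_blinfun_le[of S x] k by (intro mult_left_mono) auto
    also have "\<dots> \<le> (norm x)^2"
      using k by (simp add: mult.assoc[symmetric] mult_left_le_one_le)
    finally show "\<bar>inner (R x) x\<bar> \<le> (1 - k * c) * (norm x)^2"
      using op_lower_boundD[OF lb, of x] k unfolding R by (simp add: algebra_simps)
  qed
  moreover have "0 < k * c"
    using k c by simp
  ultimately have "op_invertible (k *\<^sub>R S)"
    by (intro op_invertible_near_id) (simp add: R_def)
  then have "op_invertible (inverse k *\<^sub>R (k *\<^sub>R S))"
    by (rule op_invertible_scaleR[rotated]) (use k in simp)
  then show ?thesis
    using k by simp
qed

lemma op_strictly_pos_iff_lower_bound:
  fixes X :: "'a::{real_inner,complete_space} \<Rightarrow>\<^sub>L 'a"
  shows "op_strictly_pos X \<longleftrightarrow> op_selfadjoint X \<and> (\<exists>a>0. op_lower_bound X a)"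
proof
  assume X: "op_strictly_pos X"
  then have "op_lower_bound X (1 / ((norm (op_inv X))^2 * norm X + 1))"
    by (intro op_pos_invertible_lower_bound) (simp_all add: op_strictly_pos_def)
  moreover have "0 < 1 / ((norm (op_inv X))^2 * norm X + 1)"
    by (simp add: add_nonneg_pos)
  ultimately have "\<exists>a>0. op_lower_bound X a"
    by blast
  with X show "op_selfadjoint X \<and> (\<exists>a>0. op_lower_bound X a)"
    by (simp add: op_strictly_pos_def op_pos_def)
next
  assume "op_selfadjoint X \<and> (\<exists>a>0. op_lower_bound X a)"
  then obtain a where sa: "op_selfadjoint X" and a: "0 < a" and lb: "op_lower_bound X a"
    by blast
  have "0 \<le> inner (X x) x" for x
    using op_lower_boundD[OF lb, of x] a
    by (meson mult_nonneg_nonneg order_trans less_imp_le zero_le_power2)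
  then show "op_strictly_pos X"
    using sa op_lower_bound_invertible[OF sa lb a] by (simp add: op_strictly_pos_def op_pos_def)
qed

lemma op_spectrum_subset_Icc:
  fixes S :: "'a::{real_inner,complete_space} \<Rightarrow>\<^sub>L 'a"
  assumes sa: "op_selfadjoint S"
    and lower: "\<And>x. m * (norm x)^2 \<le> inner (S x) x" and upper: "\<And>x. inner (S x) x \<le> M * (norm x)^2"
  shows "op_spectrum S \<subseteq> {m..M}"
proof
  fix l assume "l \<in> op_spectrum S"
  then have not_inv: "\<not> op_invertible (S - l *\<^sub>R id_blinfun)"
    by (simp add: op_spectrum_def)
  have quad: "inner ((S - l *\<^sub>R id_blinfun) x) x = inner (S x) x - l * (norm x)^2" for x
    by (simp add: blinfun.bilinear_simps inner_diff_left power2_norm_eq_inner)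
  have "\<not> l < m"
  proof
    assume "l < m"
    have "op_lower_bound (S - l *\<^sub>R id_blinfun) (m - l)"
      unfolding op_lower_bound_def quad using lower by (simp add: algebra_simps)
    then have "op_invertible (S - l *\<^sub>R id_blinfun)"
      using \<open>l < m\<close>
      by (intro op_lower_bound_invertible op_selfadjoint_diff op_selfadjoint_scaleR sa) auto
    with not_inv show False ..
  qed
  moreover have "\<not> M < l"
  proof
    assume "M < l"
    have "op_lower_bound (- (S - l *\<^sub>R id_blinfun)) (l - M)"
      unfolding op_lower_bound_def blinfun.minus_left inner_minus_left quad
      using upper by (simp add: algebra_simps)
    then have "op_invertible (- (S - l *\<^sub>R id_blinfun))"
      using \<open>M < l\<close>
      by (intro op_lower_bound_invertible op_selfadjoint_uminus op_selfadjoint_diff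
          op_selfadjoint_scaleR sa) auto
    with not_inv show False
      using op_invertible_uminus by fastforce
  qed
  ultimately show "l \<in> {m..M}"
    by simp
qed

lemma op_spectrum_subset_lower_bound:
  fixes X :: "'a::{real_inner,complete_space} \<Rightarrow>\<^sub>L 'a"
  assumes "op_selfadjoint X" "op_lower_bound X a"
  shows "op_spectrum X \<subseteq> {a..norm X}"
  by (rule op_spectrum_subset_Icc[OF assms(1)])
    (use assms(2) abs_inner_blinfun_le in \<open>auto simp: op_lower_bound_def abs_le_iff\<close>)

lemma inner_sq_diff:
  assumes "op_selfadjoint S"
  shows "inner ((K^2 *\<^sub>R id_blinfun - (S o\<^sub>L S)) x) x = K^2 * (norm x)^2 - (norm (S x))^2"
  using op_selfadjointD[OF assms, of "S x" x]
  by (simp add: blinfun.bilinear_simps inner_diff_left power2_norm_eq_inner)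

lemma norm_less_if_strictly_pos_sq_diff:
  fixes S :: "'a::{real_inner,complete_space} \<Rightarrow>\<^sub>L 'a" and x0 :: 'a
  assumes sa: "op_selfadjoint S" and x0: "x0 \<noteq> 0"
    and pos: "op_strictly_pos (K^2 *\<^sub>R id_blinfun - (S o\<^sub>L S))"
  shows "norm S < \<bar>K\<bar>"
proof -
  obtain c where c: "0 < c" and lb: "op_lower_bound (K^2 *\<^sub>R id_blinfun - (S o\<^sub>L S)) c"
    using pos by (auto simp: op_strictly_pos_iff_lower_bound)
  have bound: "(norm (S x))^2 \<le> (K^2 - c) * (norm x)^2" for x
    using op_lower_boundD[OF lb, of x] unfolding inner_sq_diff[OF sa] by (simp add: algebra_simps)
  have "c * (norm x0)^2 + (norm (S x0))^2 \<le> K^2 * (norm x0)^2"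
    using bound[of x0] by (simp add: algebra_simps)
  then have "c * (norm x0)^2 \<le> K^2 * (norm x0)^2"
    using zero_le_power2[of "norm (S x0)"] by linarith
  then have "c \<le> K^2"
    using x0 by simp
  have "norm S \<le> sqrt (K^2 - c)"
  proof (rule norm_blinfun_bound)
    show "0 \<le> sqrt (K^2 - c)"
      using \<open>c \<le> K^2\<close> by simp
    fix x
    show "norm (S x) \<le> sqrt (K^2 - c) * norm x"
      using real_sqrt_le_mono[OF bound[of x]] by (simp add: real_sqrt_mult)
  qed
  also have "\<dots> < sqrt (K^2)"
    using c by (intro real_sqrt_less_mono) simp
  finally show ?thesis
    by simp
qed

text \<open>Otherwise \<open>\<parallel>S\<parallel>\<^sup>2 - S\<^sup>2 = -(S - \<parallel>S\<parallel>) (S + \<parallel>S\<parallel>)\<close> would be positive and invertible.\<close>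

lemma norm_in_op_spectrum:
  fixes S :: "'a::{real_inner,complete_space} \<Rightarrow>\<^sub>L 'a" and x0 :: 'a
  assumes sa: "op_selfadjoint S" and x0: "x0 \<noteq> 0"
  shows "\<exists>l\<in>op_spectrum S. \<bar>l\<bar> = norm S"
proof (rule ccontr)
  assume no: "\<not> (\<exists>l\<in>op_spectrum S. \<bar>l\<bar> = norm S)"
  define K where "K = norm S"
  then have "K \<notin> op_spectrum S" "- K \<notin> op_spectrum S"
    using no by force+
  then have "op_invertible (- ((S - K *\<^sub>R id_blinfun) o\<^sub>L (S - (- K) *\<^sub>R id_blinfun)))"
    by (intro op_invertible_uminus op_invertible_compose) (simp_all add: op_spectrum_def)
  also have "- ((S - K *\<^sub>R id_blinfun) o\<^sub>L (S - (- K) *\<^sub>R id_blinfun))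
      = K^2 *\<^sub>R id_blinfun - (S o\<^sub>L S)"
    by (simp add: blinfun_compose.add_right blinfun_compose.diff_left blinfun_compose.diff_right
        blinfun_compose.scaleR_left blinfun_compose.scaleR_right algebra_simps power2_eq_square)
  finally have "op_invertible (K^2 *\<^sub>R id_blinfun - (S o\<^sub>L S))" .
  moreover have "(norm (S x))^2 \<le> (K * norm x)^2" for x
    unfolding K_def by (intro power_mono norm_blinfun) simp
  ultimately have "op_strictly_pos (K^2 *\<^sub>R id_blinfun - (S o\<^sub>L S))"
    using sa by (simp add: op_strictly_pos_def op_pos_def inner_sq_diff op_selfadjoint_diff
        op_selfadjoint_scaleR op_selfadjoint_compose_commuting power_mult_distrib)
  with sa x0 have "norm S < \<bar>K\<bar>"
    by (rule norm_less_if_strictly_pos_sq_diff)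
  then show False
    by (simp add: K_def)
qed

section \<open>Polynomials in a self-adjoint operator\<close>

lemma op_poly_eq_sum:
  assumes "degree p \<le> N"
  shows "op_poly p T = (\<Sum>i\<le>N. coeff p i *\<^sub>R op_power T i)"
  unfolding op_poly_def
  by (rule sum.mono_neutral_left) (use assms in \<open>auto simp: coeff_eq_0\<close>)

lemma op_poly_0 [simp]: "op_poly 0 T = 0"
  by (simp add: op_poly_def)

lemma op_poly_pCons: "op_poly (pCons a p) T = a *\<^sub>R id_blinfun + (T o\<^sub>L op_poly p T)"
proof -
  have "op_poly (pCons a p) T = (\<Sum>i\<le>Suc (degree p). coeff (pCons a p) i *\<^sub>R op_power T i)"
    by (rule op_poly_eq_sum) (simp add: degree_pCons_le)
  also have "\<dots> = a *\<^sub>R id_blinfun + (\<Sum>i\<le>degree p. coeff p i *\<^sub>R op_power T (Suc i))"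
    by (subst sum.atMost_Suc_shift) simp
  also have "(\<Sum>i\<le>degree p. coeff p i *\<^sub>R op_power T (Suc i)) = T o\<^sub>L op_poly p T"
    by (simp add: op_poly_def blinfun_compose.sum_right blinfun_compose.scaleR_right op_power_Suc)
  finally show ?thesis .
qed

lemma op_poly_const: "op_poly [:c:] T = c *\<^sub>R id_blinfun"
  by (simp add: op_poly_pCons)

lemma op_poly_add: "op_poly (p + q) T = op_poly p T + op_poly q T"
proof -
  define N where "N = max (degree p) (degree q)"
  have "op_poly (p + q) T = (\<Sum>i\<le>N. coeff (p + q) i *\<^sub>R op_power T i)"
    by (rule op_poly_eq_sum) (simp add: N_def degree_add_le)
  also have "\<dots> = op_poly p T + op_poly q T"
    by (simp add: op_poly_eq_sum[of p N] op_poly_eq_sum[of q N] N_def scaleR_add_left sum.distrib)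
  finally show ?thesis .
qed

lemma op_poly_smult: "op_poly (smult c p) T = c *\<^sub>R op_poly p T"
  by (simp add: op_poly_eq_sum[of "smult c p" "degree p"] op_poly_def scaleR_sum_right
      degree_smult_le)

lemma op_poly_diff: "op_poly (p - q) T = op_poly p T - op_poly q T"
  using op_poly_add[of p "- q" T] op_poly_smult[of "-1" q T] by simp

lemma op_poly_mult: "op_poly (p * q) T = op_poly p T o\<^sub>L op_poly q T"
  by (induct p) (simp_all add: mult_pCons_left op_poly_add op_poly_smult op_poly_pCons
      blinfun_compose.add_left blinfun_compose.scaleR_left blinfun_compose_assoc)

lemma op_poly_commute: "T o\<^sub>L op_poly p T = op_poly p T o\<^sub>L T"
proof (induct p)
  case (pCons a p)
  have "T o\<^sub>L (T o\<^sub>L op_poly p T) = T o\<^sub>L (op_poly p T o\<^sub>L T)"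
    by (simp only: pCons(2))
  also have "\<dots> = (T o\<^sub>L op_poly p T) o\<^sub>L T"
    by (simp only: blinfun_compose_assoc)
  finally show ?case
    by (simp add: op_poly_pCons blinfun_compose.add_left blinfun_compose.add_right
        blinfun_compose.scaleR_left blinfun_compose.scaleR_right)
qed simp

lemma op_selfadjoint_op_poly: "op_selfadjoint T \<Longrightarrow> op_selfadjoint (op_poly p T)"
  by (induct p) (simp_all add: op_poly_pCons op_selfadjoint_add op_selfadjoint_scaleR
      op_selfadjoint_compose_commuting op_poly_commute)

lemma map_poly_of_real_add:
  "map_poly complex_of_real (p + q) = map_poly of_real p + map_poly of_real q"
  by (intro poly_eqI) (simp add: coeff_map_poly)

lemma map_poly_of_real_mult:
  "map_poly complex_of_real (p * q) = map_poly of_real p * map_poly of_real q"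
  by (induct p) (simp_all add: mult_pCons_left map_poly_of_real_add map_poly_smult map_poly_pCons)

lemma poly_map_poly_of_real: "poly (map_poly complex_of_real p) (of_real x) = of_real (poly p x)"
  by (induct p) (simp_all add: map_poly_pCons)

text \<open>The quadratic factor is \<open>(x - a)\<^sup>2 + b\<^sup>2\<close> for the root \<open>z = a + i b\<close>.\<close>

lemma real_poly_quadratic_factor_of_nonreal_root:
  fixes q :: "real poly"
  assumes z: "poly (map_poly complex_of_real q) z = 0" and Im: "Im z \<noteq> 0"
  shows "[:Re z^2 + Im z^2, -2 * Re z, 1:] dvd q"
proof -
  define g where "g = [:Re z^2 + Im z^2, -2 * Re z, 1:]"
  define r where "r = q mod g"
  have "g \<noteq> 0" "degree g = 2"
    by (simp_all add: g_def)
  then have "degree r \<le> 1"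
    using degree_mod_less[of g q] by (cases "r = 0") (auto simp: r_def)
  then have r_lin: "r = [:coeff r 0, coeff r 1:]"
    by (intro poly_eqI) (auto simp: coeff_pCons coeff_eq_0 split: nat.split)
  have "poly (map_poly complex_of_real g) z = 0"
    by (simp add: g_def map_poly_pCons complex_eq_iff power2_eq_square algebra_simps)
  moreover have "map_poly complex_of_real q
      = map_poly of_real (q div g) * map_poly of_real g + map_poly complex_of_real r"
    unfolding r_def
    by (simp only: map_poly_of_real_add[symmetric] map_poly_of_real_mult[symmetric] div_mult_mod_eq)
  ultimately have "poly (map_poly complex_of_real r) z = 0"
    using z by (metis add_0 mult_zero_right poly_add poly_mult)
  then have "of_real (coeff r 0) + z * of_real (coeff r 1) = 0"
    by (subst (asm) r_lin) (simp add: map_poly_pCons)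
  then have "coeff r 1 = 0" "coeff r 0 = 0"
    using Im by (auto simp: complex_eq_iff)
  then show ?thesis
    using r_lin by (simp add: r_def g_def mod_eq_0_iff_dvd)
qed

lemma real_poly_linear_or_quadratic_factor:
  fixes q :: "real poly"
  assumes "degree q \<noteq> 0"
  obtains r where "[:-r, 1:] dvd q"
    | a b where "b \<noteq> 0" "[:a^2 + b^2, -2 * a, 1:] dvd q"
proof -
  have "\<not> constant (poly (map_poly complex_of_real q))"
    using assms by (simp add: constant_degree degree_map_poly)
  then obtain z where z: "poly (map_poly complex_of_real q) z = 0"
    using fundamental_theorem_of_algebra by blast
  show thesis
  proof (cases "Im z = 0")
    case True
    then have "z = of_real (Re z)"
      by (simp add: complex_eq_iff)
    then have "poly q (Re z) = 0"
      using z poly_map_poly_of_real[of q "Re z"] by simp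
    then show thesis
      using that(1) poly_eq_0_iff_dvd by blast
  next
    case False
    then show thesis
      using that(2) real_poly_quadratic_factor_of_nonreal_root[OF z] by blast
  qed
qed

lemma op_invertible_op_poly_quadratic:
  fixes T :: "'a::{real_inner,complete_space} \<Rightarrow>\<^sub>L 'a"
  assumes sa: "op_selfadjoint T" and b: "b \<noteq> 0"
  shows "op_invertible (op_poly [:a^2 + b^2, -2 * a, 1:] T)"
proof (rule op_lower_bound_invertible)
  show "op_selfadjoint (op_poly [:a^2 + b^2, -2 * a, 1:] T)"
    by (rule op_selfadjoint_op_poly[OF sa])
  show "0 < b^2"
    using b by simp
  show "op_lower_bound (op_poly [:a^2 + b^2, -2 * a, 1:] T) (b^2)"
    unfolding op_lower_bound_def
  proof
    fix x
    have "inner (op_poly [:a^2 + b^2, -2 * a, 1:] T x) x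
        = inner (T x) (T x) - 2 * a * inner (T x) x + (a^2 + b^2) * inner x x"
      using op_selfadjointD[OF sa, of "T x" x]
      by (simp add: op_poly_pCons blinfun.bilinear_simps inner_add_left algebra_simps)
    also have "\<dots> = (norm (T x - a *\<^sub>R x))^2 + b^2 * (norm x)^2"
      unfolding power2_norm_eq_inner
      by (simp add: inner_diff_left inner_diff_right inner_commute algebra_simps power2_eq_square)
    finally show "b^2 * (norm x)^2 \<le> inner (op_poly [:a^2 + b^2, -2 * a, 1:] T x) x"
      by simp
  qed
qed

lemma op_poly_invertible_factor:
  fixes T :: "'a::{real_inner,complete_space} \<Rightarrow>\<^sub>L 'a"
  assumes sa: "op_selfadjoint T" and q: "degree q \<noteq> 0"
    and nz: "\<And>l. l \<in> op_spectrum T \<Longrightarrow> poly q l \<noteq> 0"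
  obtains f d where "q = f * d" "0 < degree f" "op_invertible (op_poly f T)"
proof (cases rule: real_poly_linear_or_quadratic_factor[OF q])
  case (1 r)
  then obtain d where q: "q = [:-r, 1:] * d"
    by (rule dvdE)
  then have "r \<notin> op_spectrum T"
    using nz by auto
  then have "op_invertible (op_poly [:-r, 1:] T)"
    by (simp add: op_poly_pCons op_spectrum_def)
  with q show thesis
    by (intro that) simp_all
next
  case (2 a b)
  then show thesis
    using op_invertible_op_poly_quadratic[OF sa, of b a] by (auto elim!: dvdE intro: that)
qed

lemma op_invertible_op_poly:
  fixes T :: "'a::{real_inner,complete_space} \<Rightarrow>\<^sub>L 'a"
  assumes sa: "op_selfadjoint T"
  shows "(\<And>l. l \<in> op_spectrum T \<Longrightarrow> poly q l \<noteq> 0) \<Longrightarrow> op_invertible (op_poly q T)"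
proof (induct "degree q" arbitrary: q rule: less_induct)
  case less
  show ?case
  proof (cases "\<exists>x::'a. x \<noteq> 0")
    case False
    then show ?thesis
      by (simp add: op_invertible_trivial_space)
  next
    case True
    then obtain l0 where l0: "l0 \<in> op_spectrum T"
      using norm_in_op_spectrum[OF sa] by blast
    show ?thesis
    proof (cases "degree q = 0")
      case True
      then obtain c where q: "q = [:c:]"
        by (rule degree_eq_zeroE)
      then have "c \<noteq> 0"
        using less.prems[OF l0] by simp
      then show ?thesis
        by (simp add: q op_poly_const op_invertible_scaleR)
    next
      case False
      obtain f d where q: "q = f * d" and "0 < degree f" and f: "op_invertible (op_poly f T)"
        by (rule op_poly_invertible_factor[OF sa False]) (rule less.prems)
      then have "degree d < degree q"
        using False unfolding q by (subst degree_mult_eq) auto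
      moreover have "poly d l \<noteq> 0" if "l \<in> op_spectrum T" for l
        using less.prems[OF that] q by simp
      ultimately have "op_invertible (op_poly d T)"
        by (rule less.hyps)
      then show ?thesis
        using f by (simp add: q op_poly_mult op_invertible_compose)
    qed
  qed
qed

lemma op_spectrum_op_poly:
  fixes T :: "'a::{real_inner,complete_space} \<Rightarrow>\<^sub>L 'a"
  assumes sa: "op_selfadjoint T" and \<mu>: "\<mu> \<in> op_spectrum (op_poly p T)"
  shows "\<exists>l\<in>op_spectrum T. poly p l = \<mu>"
proof (rule ccontr)
  assume "\<not> (\<exists>l\<in>op_spectrum T. poly p l = \<mu>)"
  then have "op_invertible (op_poly (p - [:\<mu>:]) T)"
    by (intro op_invertible_op_poly[OF sa]) auto
  with \<mu> show False
    by (simp add: op_poly_diff op_poly_const op_spectrum_def)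
qed

lemma norm_op_poly_le:
  fixes T :: "'a::{real_inner,complete_space} \<Rightarrow>\<^sub>L 'a"
  assumes sa: "op_selfadjoint T" and B: "0 \<le> B"
    and bound: "\<And>l. l \<in> op_spectrum T \<Longrightarrow> \<bar>poly p l\<bar> \<le> B"
  shows "norm (op_poly p T) \<le> B"
proof (cases "\<exists>x::'a. x \<noteq> 0")
  case False
  then show ?thesis
    using B blinfun_eq_0_trivial_space[of "op_poly p T"] by simp
next
  case True
  then obtain \<mu> where "\<mu> \<in> op_spectrum (op_poly p T)" "\<bar>\<mu>\<bar> = norm (op_poly p T)"
    using norm_in_op_spectrum[OF op_selfadjoint_op_poly[OF sa]] by blast
  then show ?thesis
    using op_spectrum_op_poly[OF sa] bound by metis
qed

section \<open>Continuous functional calculus\<close>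

lemma uniform_limit_polynomials:
  fixes K :: "real set"
  assumes K: "compact K" and f: "continuous_on K f"
  obtains P where "uniform_limit K (\<lambda>k. poly (P k)) f sequentially"
proof -
  have "\<exists>p. \<forall>x\<in>K. \<bar>f x - poly p x\<bar> < inverse (Suc k)" for k
  proof -
    obtain g where g: "real_polynomial_function g" "\<And>x. x \<in> K \<Longrightarrow> \<bar>f x - g x\<bar> < inverse (Suc k)"
      using Stone_Weierstrass_real_polynomial_function[OF K f, of "inverse (Suc k)"] by auto
    obtain a n where "g = (\<lambda>x. \<Sum>i\<le>n. a i * x^i)"
      using g(1) real_polynomial_function_iff_sum by blast
    then have "poly (\<Sum>i\<le>n. monom (a i) i) = g"
      by (simp add: fun_eq_iff poly_sum poly_monom)
    then show ?thesis
      using g(2) by metis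
  qed
  then obtain P where P: "\<And>k x. x \<in> K \<Longrightarrow> \<bar>f x - poly (P k) x\<bar> < inverse (Suc k)"
    by metis
  have "uniform_limit K (\<lambda>k. poly (P k)) f sequentially"
  proof (rule uniform_limitI)
    fix e :: real assume "0 < e"
    then obtain N where N: "inverse (Suc N) < e"
      using reals_Archimedean by blast
    have "dist (poly (P k) x) (f x) < e" if "N \<le> k" "x \<in> K" for k x
    proof -
      have "\<bar>f x - poly (P k) x\<bar> < inverse (Suc k)"
        using P[OF that(2)] .
      also have "\<dots> \<le> inverse (Suc N)"
        using that(1) by (simp add: field_simps)
      finally show ?thesis
        using N by (simp add: dist_real_def abs_minus_commute)
    qed
    then show "\<forall>\<^sub>F k in sequentially. \<forall>x\<in>K. dist (poly (P k) x) (f x) < e"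
      unfolding eventually_sequentially by blast
  qed
  then show thesis
    by (rule that)
qed

lemma norm_op_poly_diff_le:
  fixes T :: "'a::{real_inner,complete_space} \<Rightarrow>\<^sub>L 'a"
  assumes sa: "op_selfadjoint T" and e: "0 \<le> e"
    and p: "\<And>l. l \<in> op_spectrum T \<Longrightarrow> dist (poly p l) (f l) \<le> e"
    and q: "\<And>l. l \<in> op_spectrum T \<Longrightarrow> dist (poly q l) (f l) \<le> e"
  shows "norm (op_poly p T - op_poly q T) \<le> 2 * e"
proof -
  have "\<bar>poly (p - q) l\<bar> \<le> 2 * e" if "l \<in> op_spectrum T" for l
    using dist_triangle2[of "poly p l" "poly q l" "f l"] p[OF that] q[OF that]
    by (simp add: dist_real_def)
  then show ?thesis
    using norm_op_poly_le[OF sa, of "2 * e" "p - q"] e by (simp add: op_poly_diff)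
qed

lemma Cauchy_op_poly:
  fixes T :: "'a::{real_inner,complete_space} \<Rightarrow>\<^sub>L 'a"
  assumes sa: "op_selfadjoint T"
    and P: "uniform_limit (op_spectrum T) (\<lambda>k. poly (P k)) f sequentially"
  shows "Cauchy (\<lambda>k. op_poly (P k) T)"
proof (rule CauchyI)
  fix e :: real assume "0 < e"
  then obtain M where M: "\<And>k l. M \<le> k \<Longrightarrow> l \<in> op_spectrum T \<Longrightarrow> dist (poly (P k) l) (f l) < e / 3"
    using uniform_limitD[OF P, of "e / 3"] unfolding eventually_sequentially by auto
  have "norm (op_poly (P m) T - op_poly (P n) T) \<le> 2 * (e / 3)" if "M \<le> m" "M \<le> n" for m n
    using M[OF that(1)] M[OF that(2)] \<open>0 < e\<close>
    by (intro norm_op_poly_diff_le[OF sa, where f=f]) (auto simp: less_imp_le)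
  moreover have "2 * (e / 3) < e"
    using \<open>0 < e\<close> by simp
  ultimately show "\<exists>M. \<forall>m\<ge>M. \<forall>n\<ge>M. norm (op_poly (P m) T - op_poly (P n) T) < e"
    by (meson order.strict_trans1)
qed

text \<open>This is the well-definedness of \<^const>\<open>op_fc\<close>: the limit of \<open>P k (T)\<close> does not depend
  on the approximating sequence.\<close>

lemma op_poly_tendsto_op_fc:
  fixes T :: "'a::{real_inner,complete_space} \<Rightarrow>\<^sub>L 'a"
  assumes sa: "op_selfadjoint T"
    and P: "uniform_limit (op_spectrum T) (\<lambda>k. poly (P k)) f sequentially"
  shows "(\<lambda>k. op_poly (P k) T) \<longlonglongrightarrow> op_fc f T"
proof -
  obtain L where L: "(\<lambda>k. op_poly (P k) T) \<longlonglongrightarrow> L"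
    using convergent_blinfun_if_Cauchy[OF Cauchy_op_poly[OF sa P]] unfolding convergent_def by blast
  have "(\<lambda>k. op_poly (Q k) T) \<longlonglongrightarrow> L"
    if Q: "uniform_limit (op_spectrum T) (\<lambda>k. poly (Q k)) f sequentially" for Q
  proof -
    have "(\<lambda>k. op_poly (P k) T - op_poly (Q k) T) \<longlonglongrightarrow> 0"
    proof (rule tendstoI)
      fix e :: real assume e: "0 < e"
      then have e4: "0 < e / 4"
        by simp
      show "\<forall>\<^sub>F k in sequentially. dist (op_poly (P k) T - op_poly (Q k) T) 0 < e"
        using uniform_limitD[OF P e4] uniform_limitD[OF Q e4]
      proof eventually_elim
        case (elim k)
        then have "norm (op_poly (P k) T - op_poly (Q k) T) \<le> 2 * (e / 4)"
          using e4 by (intro norm_op_poly_diff_le[OF sa, where f=f]) (auto simp: less_imp_le)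
        then show ?case
          using e by simp
      qed
    qed
    from tendsto_diff[OF L this] show ?thesis
      by simp
  qed
  then have "op_fc f T = L"
    unfolding op_fc_def using P L LIMSEQ_unique by (intro the_equality) blast+
  with L show ?thesis
    by simp
qed

lemma op_fc_poly:
  fixes T :: "'a::{real_inner,complete_space} \<Rightarrow>\<^sub>L 'a"
  assumes "op_selfadjoint T"
  shows "op_fc (poly p) T = op_poly p T"
  using op_poly_tendsto_op_fc[OF assms uniform_limit_const[of "poly p"]]
  by (simp add: LIMSEQ_const_iff)

lemma op_fc_const:
  fixes T :: "'a::{real_inner,complete_space} \<Rightarrow>\<^sub>L 'a"
  assumes "op_selfadjoint T"
  shows "op_fc (\<lambda>x. c) T = c *\<^sub>R id_blinfun"
proof -
  have "poly [:c:] = (\<lambda>x::real. c)"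
    by (simp add: fun_eq_iff)
  then show ?thesis
    using op_fc_poly[OF assms, of "[:c:]"] by (simp add: op_poly_const)
qed

lemma op_fc_id:
  fixes T :: "'a::{real_inner,complete_space} \<Rightarrow>\<^sub>L 'a"
  assumes "op_selfadjoint T"
  shows "op_fc (\<lambda>x. x) T = T"
proof -
  have "poly [:0, 1:] = (\<lambda>x::real. x)"
    by (simp add: fun_eq_iff)
  then show ?thesis
    using op_fc_poly[OF assms, of "[:0, 1:]"] by (simp add: op_poly_pCons)
qed

lemma op_fc_cong:
  assumes "\<And>x. x \<in> op_spectrum T \<Longrightarrow> f x = g x"
  shows "op_fc f T = op_fc g T"
proof -
  have "uniform_limit (op_spectrum T) (\<lambda>k. poly (P k)) f sequentially
      \<longleftrightarrow> uniform_limit (op_spectrum T) (\<lambda>k. poly (P k)) g sequentially" for P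
    using assms by (intro uniform_limit_cong) auto
  then show ?thesis
    unfolding op_fc_def by simp
qed

context
  fixes T :: "'a::{real_inner,complete_space} \<Rightarrow>\<^sub>L 'a" and K :: "real set"
  assumes sa: "op_selfadjoint T" and spectrum: "op_spectrum T \<subseteq> K" and K: "compact K"
begin

lemma op_fc_approximation:
  assumes "continuous_on K f"
  obtains P where "uniform_limit (op_spectrum T) (\<lambda>k. poly (P k)) f sequentially"
    "(\<lambda>k. op_poly (P k) T) \<longlonglongrightarrow> op_fc f T"
proof -
  obtain P where "uniform_limit K (\<lambda>k. poly (P k)) f sequentially"
    using uniform_limit_polynomials[OF K assms] .
  then have "uniform_limit (op_spectrum T) (\<lambda>k. poly (P k)) f sequentially"
    using spectrum by (rule uniform_limit_on_subset)
  then show thesis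
    using that op_poly_tendsto_op_fc[OF sa] by blast
qed

lemma op_fc_add:
  assumes f: "continuous_on K f" and g: "continuous_on K g"
  shows "op_fc (\<lambda>x. f x + g x) T = op_fc f T + op_fc g T"
proof -
  obtain P where P: "uniform_limit (op_spectrum T) (\<lambda>k. poly (P k)) f sequentially"
    "(\<lambda>k. op_poly (P k) T) \<longlonglongrightarrow> op_fc f T"
    using op_fc_approximation[OF f] .
  obtain Q where Q: "uniform_limit (op_spectrum T) (\<lambda>k. poly (Q k)) g sequentially"
    "(\<lambda>k. op_poly (Q k) T) \<longlonglongrightarrow> op_fc g T"
    using op_fc_approximation[OF g] .
  have "uniform_limit (op_spectrum T) (\<lambda>k. poly (P k + Q k)) (\<lambda>x. f x + g x) sequentially"
    unfolding poly_add by (intro uniform_limit_intros P(1) Q(1))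
  from op_poly_tendsto_op_fc[OF sa this]
  have "(\<lambda>k. op_poly (P k) T + op_poly (Q k) T) \<longlonglongrightarrow> op_fc (\<lambda>x. f x + g x) T"
    by (simp add: op_poly_add)
  moreover have "(\<lambda>k. op_poly (P k) T + op_poly (Q k) T) \<longlonglongrightarrow> op_fc f T + op_fc g T"
    by (intro tendsto_add P(2) Q(2))
  ultimately show ?thesis
    by (rule LIMSEQ_unique)
qed

lemma op_fc_scaleR:
  assumes f: "continuous_on K f"
  shows "op_fc (\<lambda>x. c * f x) T = c *\<^sub>R op_fc f T"
proof -
  obtain P where P: "uniform_limit (op_spectrum T) (\<lambda>k. poly (P k)) f sequentially"
    "(\<lambda>k. op_poly (P k) T) \<longlonglongrightarrow> op_fc f T"
    using op_fc_approximation[OF f] .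
  have "uniform_limit (op_spectrum T) (\<lambda>k. poly (smult c (P k))) (\<lambda>x. c * f x) sequentially"
    unfolding poly_smult by (intro uniform_limit_intros P(1))
  from op_poly_tendsto_op_fc[OF sa this]
  have "(\<lambda>k. c *\<^sub>R op_poly (P k) T) \<longlonglongrightarrow> op_fc (\<lambda>x. c * f x) T"
    by (simp add: op_poly_smult)
  moreover have "(\<lambda>k. c *\<^sub>R op_poly (P k) T) \<longlonglongrightarrow> c *\<^sub>R op_fc f T"
    by (intro tendsto_scaleR tendsto_const P(2))
  ultimately show ?thesis
    by (rule LIMSEQ_unique)
qed

lemma op_fc_mult:
  assumes f: "continuous_on K f" and g: "continuous_on K g"
  shows "op_fc (\<lambda>x. f x * g x) T = op_fc f T o\<^sub>L op_fc g T"
proof -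
  obtain P where P: "uniform_limit (op_spectrum T) (\<lambda>k. poly (P k)) f sequentially"
    "(\<lambda>k. op_poly (P k) T) \<longlonglongrightarrow> op_fc f T"
    using op_fc_approximation[OF f] .
  obtain Q where Q: "uniform_limit (op_spectrum T) (\<lambda>k. poly (Q k)) g sequentially"
    "(\<lambda>k. op_poly (Q k) T) \<longlonglongrightarrow> op_fc g T"
    using op_fc_approximation[OF g] .
  have bounded: "bounded (h ` op_spectrum T)" if "continuous_on K h" for h :: "real \<Rightarrow> real"
    using compact_imp_bounded[OF compact_continuous_image[OF that K]] spectrum
    by (meson bounded_subset image_mono)
  have "uniform_limit (op_spectrum T) (\<lambda>k. poly (P k * Q k)) (\<lambda>x. f x * g x) sequentially"
    unfolding poly_mult by (intro uniform_lim_mult P(1) Q(1) bounded f g)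
  from op_poly_tendsto_op_fc[OF sa this]
  have "(\<lambda>k. op_poly (P k) T o\<^sub>L op_poly (Q k) T) \<longlonglongrightarrow> op_fc (\<lambda>x. f x * g x) T"
    by (simp add: op_poly_mult)
  moreover have "(\<lambda>k. op_poly (P k) T o\<^sub>L op_poly (Q k) T) \<longlonglongrightarrow> (op_fc f T o\<^sub>L op_fc g T)"
    by (intro blinfun_compose.tendsto P(2) Q(2))
  ultimately show ?thesis
    by (rule LIMSEQ_unique)
qed

lemma op_fc_diff:
  assumes f: "continuous_on K f" and g: "continuous_on K g"
  shows "op_fc (\<lambda>x. f x - g x) T = op_fc f T - op_fc g T"
  using op_fc_add[OF f continuous_on_mult_left[OF g, of "-1"]] op_fc_scaleR[OF g, of "-1"] by simp

lemma op_fc_sum: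
  assumes "\<And>i. i \<in> I \<Longrightarrow> continuous_on K (f i)"
  shows "op_fc (\<lambda>x. \<Sum>i\<in>I. f i x) T = (\<Sum>i\<in>I. op_fc (f i) T)"
  using assms
proof (induct I rule: infinite_finite_induct)
  case (insert i I)
  then show ?case
    by (simp add: op_fc_add continuous_on_sum)
qed (simp_all add: op_fc_const[OF sa])

lemma op_selfadjoint_op_fc:
  assumes "continuous_on K f"
  shows "op_selfadjoint (op_fc f T)"
proof -
  obtain P where "(\<lambda>k. op_poly (P k) T) \<longlonglongrightarrow> op_fc f T"
    using op_fc_approximation[OF assms] by blast
  then show ?thesis
    by (rule op_selfadjoint_limit) (rule op_selfadjoint_op_poly[OF sa])
qed

lemma norm_op_fc_le:
  assumes f: "continuous_on K f" and B: "0 \<le> B" and bound: "\<And>x. x \<in> op_spectrum T \<Longrightarrow> \<bar>f x\<bar> \<le> B"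
  shows "norm (op_fc f T) \<le> B"
proof (rule field_le_epsilon)
  fix e :: real assume e: "0 < e"
  obtain P where P: "uniform_limit (op_spectrum T) (\<lambda>k. poly (P k)) f sequentially"
    "(\<lambda>k. op_poly (P k) T) \<longlonglongrightarrow> op_fc f T"
    using op_fc_approximation[OF f] .
  have "\<forall>\<^sub>F k in sequentially. norm (op_poly (P k) T) \<le> B + e"
    using uniform_limitD[OF P(1) e]
  proof eventually_elim
    case (elim k)
    show ?case
    proof (rule norm_op_poly_le[OF sa])
      show "0 \<le> B + e"
        using B e by simp
      fix l assume l: "l \<in> op_spectrum T"
      then have "\<bar>poly (P k) l - f l\<bar> < e"
        using elim by (simp add: dist_real_def)
      then show "\<bar>poly (P k) l\<bar> \<le> B + e"
        using bound[OF l] by simp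
    qed
  qed
  then show "norm (op_fc f T) \<le> B + e"
    by (intro tendsto_upperbound[OF tendsto_norm[OF P(2)]]) simp_all
qed

lemma op_fc_inverse:
  assumes f: "continuous_on K f" and g: "continuous_on K g"
    and fg: "\<And>x. x \<in> op_spectrum T \<Longrightarrow> f x * g x = 1"
  shows "op_invertible (op_fc f T)" "op_inv (op_fc f T) = op_fc g T"
proof -
  have "op_fc f T o\<^sub>L op_fc g T = id_blinfun" "op_fc g T o\<^sub>L op_fc f T = id_blinfun"
    using op_fc_mult[OF f g] op_fc_mult[OF g f] op_fc_cong[of T "\<lambda>x. f x * g x" "\<lambda>x. 1"]
      op_fc_cong[of T "\<lambda>x. g x * f x" "\<lambda>x. 1"] fg op_fc_const[OF sa, of 1]
    by (simp_all add: mult.commute)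
  then show "op_invertible (op_fc f T)" "op_inv (op_fc f T) = op_fc g T"
    by (simp_all add: op_invertibleI op_inv_eqI)
qed

lemma op_fc_tendsto:
  assumes F: "\<And>k. continuous_on K (F k)" and f: "continuous_on K f"
    and lim: "uniform_limit K F f sequentially"
  shows "(\<lambda>k. op_fc (F k) T) \<longlonglongrightarrow> op_fc f T"
proof (rule tendstoI)
  fix e :: real assume e: "0 < e"
  show "\<forall>\<^sub>F k in sequentially. dist (op_fc (F k) T) (op_fc f T) < e"
    using uniform_limitD[OF lim half_gt_zero[OF e]]
  proof eventually_elim
    case (elim k)
    have "norm (op_fc (\<lambda>x. F k x - f x) T) \<le> e / 2"
      using elim spectrum e
      by (intro norm_op_fc_le continuous_intros F f) (auto simp: dist_real_def less_imp_le)
    then show ?case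
      using e by (simp add: dist_norm op_fc_diff[OF F f])
  qed
qed

lemma op_poly_op_fc:
  assumes g: "continuous_on K g"
  shows "op_poly p (op_fc g T) = op_fc (\<lambda>x. poly p (g x)) T"
proof (induct p)
  case 0
  then show ?case
    using op_fc_const[OF sa, of 0] by simp
next
  case (pCons a p)
  have cont: "continuous_on K (\<lambda>x. poly p (g x))"
    by (intro continuous_intros g)
  have "op_fc (\<lambda>x. poly (pCons a p) (g x)) T = op_fc (\<lambda>x. a) T + op_fc (\<lambda>x. g x * poly p (g x)) T"
    by (simp add: op_fc_add[symmetric] cont g continuous_intros)
  also have "\<dots> = op_poly (pCons a p) (op_fc g T)"
    by (simp add: op_poly_pCons pCons(2) op_fc_const[OF sa] op_fc_mult[OF g cont])
  finally show ?case ..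
qed

text \<open>Composition is reduced to the polynomial case via \<open>op_poly_op_fc\<close>; the spectral
  inclusion for \<open>op_fc g T\<close> is a hypothesis because the spectral mapping theorem is only
  available for polynomials.\<close>

lemma op_fc_compose:
  assumes g: "continuous_on K g" and L: "compact L" "g ` K \<subseteq> L" "op_spectrum (op_fc g T) \<subseteq> L"
    and f: "continuous_on L f"
  shows "op_fc f (op_fc g T) = op_fc (\<lambda>x. f (g x)) T"
proof -
  obtain P where P: "uniform_limit L (\<lambda>k. poly (P k)) f sequentially"
    using uniform_limit_polynomials[OF L(1) f] .
  have "(\<lambda>k. op_poly (P k) (op_fc g T)) \<longlonglongrightarrow> op_fc f (op_fc g T)"
    using uniform_limit_on_subset[OF P L(3)]
    by (intro op_poly_tendsto_op_fc op_selfadjoint_op_fc g)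
  moreover have "(\<lambda>k. op_fc (\<lambda>x. poly (P k) (g x)) T) \<longlonglongrightarrow> op_fc (\<lambda>x. f (g x)) T"
  proof (rule op_fc_tendsto)
    show "uniform_limit K (\<lambda>k x. poly (P k) (g x)) (\<lambda>x. f (g x)) sequentially"
      using L(2) by (intro uniform_limit_compose'[OF P]) auto
    show "continuous_on K (\<lambda>x. f (g x))"
      using L(2) by (intro continuous_on_compose2[OF f g]) auto
  qed (intro continuous_intros g)
  ultimately show ?thesis
    by (simp add: op_poly_op_fc[OF g] LIMSEQ_unique)
qed

end

lemma op_strictly_pos_spectrum:
  fixes X :: "'a::{real_inner,complete_space} \<Rightarrow>\<^sub>L 'a"
  assumes "op_strictly_pos X"
  obtains a b where "0 < a" "a \<le> b" "op_spectrum X \<subseteq> {a..b}"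
proof -
  obtain a where "0 < a" "op_lower_bound X a" "op_selfadjoint X"
    using assms by (auto simp: op_strictly_pos_iff_lower_bound)
  then have "op_spectrum X \<subseteq> {a..max a (norm X)}"
    using op_spectrum_subset_lower_bound by fastforce
  with \<open>0 < a\<close> show thesis
    by (intro that) auto
qed

lemma op_fc_powr:
  fixes X :: "'a::{real_inner,complete_space} \<Rightarrow>\<^sub>L 'a"
  assumes X: "op_strictly_pos X"
  shows "op_selfadjoint (op_fc (\<lambda>t. t powr r) X)"
    and "op_fc (\<lambda>t. t powr r) X o\<^sub>L op_fc (\<lambda>t. t powr s) X = op_fc (\<lambda>t. t powr (r + s)) X"
    and "op_fc (\<lambda>t. t powr 0) X = id_blinfun"
    and "op_fc (\<lambda>t. t powr 1) X = X"
proof -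
  obtain a b where ab: "0 < a" "op_spectrum X \<subseteq> {a..b}"
    using op_strictly_pos_spectrum[OF X] by blast
  note sa = op_strictly_pos_selfadjoint[OF X]
  have pos: "0 < t" if "t \<in> op_spectrum X" for t
    using that ab by auto
  have cont: "continuous_on {a..b} (\<lambda>t. t powr r)" for r
    using ab(1) by (intro continuous_intros) auto
  show "op_selfadjoint (op_fc (\<lambda>t. t powr r) X)"
    by (rule op_selfadjoint_op_fc[OF sa ab(2) compact_Icc cont])
  show "op_fc (\<lambda>t. t powr r) X o\<^sub>L op_fc (\<lambda>t. t powr s) X = op_fc (\<lambda>t. t powr (r + s)) X"
    unfolding op_fc_mult[OF sa ab(2) compact_Icc cont cont, symmetric]
    by (intro op_fc_cong) (simp add: powr_add)
  have "op_fc (\<lambda>t. t powr 0) X = op_fc (\<lambda>t. 1) X"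
    using pos by (intro op_fc_cong) fastforce
  then show "op_fc (\<lambda>t. t powr 0) X = id_blinfun"
    by (simp add: op_fc_const[OF sa])
  have "op_fc (\<lambda>t. t powr 1) X = op_fc (\<lambda>t. t) X"
    using pos by (intro op_fc_cong) fastforce
  then show "op_fc (\<lambda>t. t powr 1) X = X"
    by (simp add: op_fc_id[OF sa])
qed

lemma op_fc_ln_op_inv:
  fixes X :: "'a::{real_inner,complete_space} \<Rightarrow>\<^sub>L 'a"
  assumes X: "op_strictly_pos X"
  shows "op_fc ln (op_inv X) = - op_fc ln X"
proof -
  obtain a b where ab: "0 < a" "a \<le> b" "op_spectrum X \<subseteq> {a..b}"
    using op_strictly_pos_spectrum[OF X] by blast
  obtain a' b' where ab': "0 < a'" "op_spectrum (op_inv X) \<subseteq> {a'..b'}"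
    using op_strictly_pos_spectrum[OF op_strictly_pos_op_inv[OF X]] by blast
  note sa = op_strictly_pos_selfadjoint[OF X]
  have pos: "0 < t" if "t \<in> {a..b}" for t
    using that ab by auto
  have inv: "continuous_on {a..b} (\<lambda>t. 1 / t)"
    using ab(1) by (intro continuous_intros) auto
  have X_inv: "op_inv X = op_fc (\<lambda>t. 1 / t) X"
    using op_fc_inverse(2)[OF sa ab(3) compact_Icc continuous_on_id inv] op_fc_id[OF sa] pos ab(3)
    by fastforce
  define L where "L = {min a' (1 / b) .. max b' (1 / a)}"
  have "1 / b \<le> 1 / t" "1 / t \<le> 1 / a" if "t \<in> {a..b}" for t
    using that ab(1) by (auto intro!: divide_left_mono)
  then have image: "(\<lambda>t. 1 / t) ` {a..b} \<subseteq> L"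
    by (fastforce simp: L_def min_le_iff_disj le_max_iff_disj)
  have "op_spectrum (op_fc (\<lambda>t. 1 / t) X) \<subseteq> L"
    using ab'(2) X_inv by (auto simp: L_def min_le_iff_disj le_max_iff_disj)
  moreover have "0 < min a' (1 / b)"
    using ab ab' by simp
  then have "continuous_on L ln"
    by (intro continuous_intros) (auto simp: L_def min_le_iff_disj)
  ultimately have "op_fc ln (op_inv X) = op_fc (\<lambda>t. ln (1 / t)) X"
    unfolding X_inv using image
    by (intro op_fc_compose[OF sa ab(3) compact_Icc inv]) (simp_all add: L_def)
  also have "\<dots> = op_fc (\<lambda>t. - 1 * ln t) X"
    using ab(3) pos by (intro op_fc_cong) (auto simp: ln_div)
  also have "\<dots> = - op_fc ln X"
    using op_fc_scaleR[OF sa ab(3) compact_Icc, of ln "-1"] ab(1)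
    by (simp add: continuous_on_ln continuous_on_id)
  finally show ?thesis .
qed

lemma op_fc_ln_id: "op_fc ln (id_blinfun :: 'a::{real_inner,complete_space} \<Rightarrow>\<^sub>L 'a) = 0"
proof -
  have "op_spectrum (id_blinfun :: 'a \<Rightarrow>\<^sub>L 'a) \<subseteq> {1..1}"
    by (rule op_spectrum_subset_Icc) (simp_all add: power2_norm_eq_inner)
  then have "op_fc ln (id_blinfun :: 'a \<Rightarrow>\<^sub>L 'a) = op_fc (\<lambda>t. 0) id_blinfun"
    by (intro op_fc_cong) auto
  then show ?thesis
    by (simp add: op_fc_const)
qed

section \<open>The logarithm as a limit of operator concave functions\<close>

text \<open>\<open>ln t = \<integral>\<^sub>0\<^sup>1 ln_integrand u t du\<close>, and for \<open>u > 0\<close> the integrand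
  \<open>(1 - (1 + u (t - 1))\<^sup>-\<^sup>1) / u\<close> is operator concave since inversion is operator convex.\<close>

definition ln_integrand :: "real \<Rightarrow> real \<Rightarrow> real" where
  "ln_integrand u t = (t - 1) / (1 + u * (t - 1))"

definition ln_riemann_sum :: "nat \<Rightarrow> real \<Rightarrow> real" where
  "ln_riemann_sum N t = (\<Sum>k<N. ln_integrand (real (Suc k) / real N) t) / real N"

lemma ln_integrand_denominator_pos:
  fixes u t :: real
  assumes "0 \<le> u" "u \<le> 1" "0 < t"
  shows "0 < 1 + u * (t - 1)"
proof -
  have "0 < (1 - u) * 1 + u * t"
    using assms by (cases "u = 0") (auto intro: add_nonneg_pos add_pos_nonneg)
  then show ?thesis
    by (simp add: algebra_simps)
qed

lemma continuous_on_ln_integrand: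
  assumes "0 \<le> u" "u \<le> 1" "0 < a"
  shows "continuous_on {a..b} (ln_integrand u)"
proof -
  have "1 + u * (t - 1) \<noteq> 0" if "t \<in> {a..b}" for t
    using ln_integrand_denominator_pos[of u t] assms that by simp
  then show ?thesis
    unfolding ln_integrand_def by (intro continuous_intros) auto
qed

lemma continuous_on_ln_riemann_sum: "0 < a \<Longrightarrow> continuous_on {a..b} (ln_riemann_sum N)"
  unfolding ln_riemann_sum_def
  by (cases "N = 0") (auto intro!: continuous_intros continuous_on_ln_integrand)

lemma ln_diff_bounds:
  fixes p q :: real
  assumes "0 < p" "0 < q"
  shows "(q - p) / q \<le> ln q - ln p" "ln q - ln p \<le> (q - p) / p"
  using assms ln_le_minus_one[of "p / q"] ln_le_minus_one[of "q / p"]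
  by (simp_all add: ln_div diff_divide_distrib)

text \<open>The right-endpoint Riemann sum of the decreasing function \<open>u \<mapsto> ln_integrand u t\<close>
  underestimates the integral by at most the telescoped difference of the endpoint values.\<close>

lemma ln_riemann_sum_error:
  assumes t: "0 < t" and N: "0 < N"
  shows "0 \<le> ln t - ln_riemann_sum N t" "ln t - ln_riemann_sum N t \<le> (t - 1)^2 / (t * N)"
proof -
  define h where "h k = ln_integrand (real k / real N) t / real N" for k
  define D where "D k = 1 + (real k / real N) * (t - 1)" for k
  have D_pos: "0 < D k" if "k \<le> N" for k
    unfolding D_def using that N t by (intro ln_integrand_denominator_pos) (auto simp: field_simps)
  have step: "D (Suc k) - D k = (t - 1) / N" for k
    using N by (simp add: D_def field_simps)
  have h: "h k = (D (Suc k) - D k) / D k" for k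
    unfolding step by (simp add: h_def ln_integrand_def D_def)
  define \<Delta> where "\<Delta> k = ln (D (Suc k)) - ln (D k)" for k
  have bounds: "h (Suc k) \<le> \<Delta> k" "\<Delta> k \<le> h k" if "k < N" for k
    using ln_diff_bounds[of "D k" "D (Suc k)"] D_pos[of k] D_pos[of "Suc k"] that
    by (simp_all add: \<Delta>_def h step)
  have "(\<Sum>k<N. \<Delta> k) = ln (D N) - ln (D 0)"
    unfolding \<Delta>_def by (rule sum_lessThan_telescope)
  also have "\<dots> = ln t"
    using N by (simp add: D_def)
  finally have "(\<Sum>k<N. \<Delta> k) = ln t" .
  then have error: "ln t - ln_riemann_sum N t = (\<Sum>k<N. \<Delta> k - h (Suc k))"
    by (simp add: ln_riemann_sum_def h_def sum_subtractf sum_divide_distrib)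
  show "0 \<le> ln t - ln_riemann_sum N t"
    unfolding error using bounds(1) by (intro sum_nonneg) simp
  have "(\<Sum>k<N. \<Delta> k - h (Suc k)) \<le> (\<Sum>k<N. h k - h (Suc k))"
    using bounds(2) by (intro sum_mono) simp
  also have "\<dots> = h 0 - h N"
    by (rule sum_lessThan_telescope')
  also have "\<dots> = (t - 1)^2 / (t * N)"
    using N t by (simp add: h_def ln_integrand_def field_simps power2_eq_square)
  finally show "ln t - ln_riemann_sum N t \<le> (t - 1)^2 / (t * N)"
    unfolding error .
qed

lemma uniform_limit_ln_riemann_sum:
  assumes a: "0 < a"
  shows "uniform_limit {a..b} ln_riemann_sum ln sequentially"
proof (rule uniform_limitI)
  fix e :: real assume e: "0 < e"
  define c where "c = (\<bar>b\<bar> + 1)^2 / a"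
  obtain N0 :: nat where N0: "c / e < N0"
    using reals_Archimedean2 by blast
  have "0 \<le> c / e"
    using a e by (simp add: c_def)
  with N0 have "0 < N0"
    by linarith
  have "dist (ln_riemann_sum N t) (ln t) < e" if N: "N0 \<le> N" and t: "t \<in> {a..b}" for N t
  proof -
    have "0 < t" "0 < N"
      using t a N \<open>0 < N0\<close> by auto
    have "\<bar>t - 1\<bar> \<le> \<bar>b\<bar> + 1"
      using t a by auto
    then have "(t - 1)^2 \<le> (\<bar>b\<bar> + 1)^2"
      by (metis abs_ge_zero power2_abs power_mono)
    then have "(t - 1)^2 / (t * N) \<le> c / N"
      using t a \<open>0 < N\<close> by (auto simp: c_def intro!: frac_le mult_right_mono)
    also have "\<dots> < e"
    proof -
      have "c < e * N0"
        using N0 e by (simp add: field_simps)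
      also have "\<dots> \<le> e * N"
        using N e by simp
      finally show ?thesis
        using \<open>0 < N\<close> by (simp add: field_simps)
    qed
    finally show ?thesis
      using ln_riemann_sum_error[OF \<open>0 < t\<close> \<open>0 < N\<close>] by (simp add: dist_real_def)
  qed
  then show "\<forall>\<^sub>F N in sequentially. \<forall>t\<in>{a..b}. dist (ln_riemann_sum N t) (ln t) < e"
    unfolding eventually_sequentially by blast
qed

lemma op_fc_ln_integrand:
  fixes X :: "'a::{real_inner,complete_space} \<Rightarrow>\<^sub>L 'a"
  assumes sa: "op_selfadjoint X" and sp: "op_spectrum X \<subseteq> {a..b}" and a: "0 < a"
    and u: "0 < u" "u \<le> 1"
  shows "op_invertible (id_blinfun + u *\<^sub>R (X - id_blinfun))"
    and "op_fc (ln_integrand u) X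
      = (1 / u) *\<^sub>R (id_blinfun - op_inv (id_blinfun + u *\<^sub>R (X - id_blinfun)))"
proof -
  define d where "d t = 1 + u * (t - 1)" for t
  have d_pos: "0 < d t" if "t \<in> {a..b}" for t
    using ln_integrand_denominator_pos[of u t] a u that by (simp add: d_def)
  have cont_d: "continuous_on {a..b} d"
    unfolding d_def by (intro continuous_intros)
  have cont_inv_d: "continuous_on {a..b} (\<lambda>t. 1 / d t)"
    using d_pos by (intro continuous_intros cont_d) force
  have "d = poly [:1 - u, u:]"
    by (simp add: d_def fun_eq_iff algebra_simps)
  then have "op_fc d X = id_blinfun + u *\<^sub>R (X - id_blinfun)"
    by (simp add: op_fc_poly[OF sa] op_poly_pCons blinfun_compose.scaleR_right algebra_simps)
  moreover have "d t * (1 / d t) = 1" if "t \<in> op_spectrum X" for t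
    using d_pos[of t] that sp by auto
  ultimately have inv: "op_invertible (id_blinfun + u *\<^sub>R (X - id_blinfun))"
    "op_inv (id_blinfun + u *\<^sub>R (X - id_blinfun)) = op_fc (\<lambda>t. 1 / d t) X"
    using op_fc_inverse[OF sa sp compact_Icc cont_d cont_inv_d] by simp_all
  then show "op_invertible (id_blinfun + u *\<^sub>R (X - id_blinfun))"
    by simp
  have "op_fc (ln_integrand u) X = op_fc (\<lambda>t. (1 / u) * (1 - 1 / d t)) X"
    using d_pos sp u by (intro op_fc_cong) (force simp: ln_integrand_def d_def field_simps)
  also have "\<dots> = (1 / u) *\<^sub>R op_fc (\<lambda>t. 1 - 1 / d t) X"
    by (rule op_fc_scaleR[OF sa sp compact_Icc]) (intro continuous_intros cont_inv_d)
  also have "op_fc (\<lambda>t. 1 - 1 / d t) X = id_blinfun - op_fc (\<lambda>t. 1 / d t) X"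
    using op_fc_diff[OF sa sp compact_Icc continuous_on_const cont_inv_d]
    by (simp add: op_fc_const[OF sa])
  finally show "op_fc (ln_integrand u) X
      = (1 / u) *\<^sub>R (id_blinfun - op_inv (id_blinfun + u *\<^sub>R (X - id_blinfun)))"
    by (simp add: inv)
qed

lemma op_fc_ln_riemann_sum:
  fixes X :: "'a::{real_inner,complete_space} \<Rightarrow>\<^sub>L 'a"
  assumes sa: "op_selfadjoint X" and sp: "op_spectrum X \<subseteq> {a..b}" and a: "0 < a"
  shows "op_fc (ln_riemann_sum N) X = (1 / N) *\<^sub>R (\<Sum>k<N. op_fc (ln_integrand (Suc k / N)) X)"
proof -
  have cont: "continuous_on {a..b} (ln_integrand (Suc k / N))" if "k < N" for k
    using that a by (intro continuous_on_ln_integrand) auto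
  have "ln_riemann_sum N = (\<lambda>t. (1 / N) * (\<Sum>k<N. ln_integrand (Suc k / N) t))"
    by (simp add: fun_eq_iff ln_riemann_sum_def)
  moreover have "op_fc (\<lambda>t. (1 / N) * (\<Sum>k<N. ln_integrand (Suc k / N) t)) X
      = (1 / N) *\<^sub>R op_fc (\<lambda>t. \<Sum>k<N. ln_integrand (Suc k / N) t) X"
    by (rule op_fc_scaleR[OF sa sp compact_Icc]) (use cont in \<open>auto intro: continuous_on_sum\<close>)
  ultimately have "op_fc (ln_riemann_sum N) X
      = (1 / N) *\<^sub>R op_fc (\<lambda>t. \<Sum>k<N. ln_integrand (Suc k / N) t) X"
    by simp
  also have "op_fc (\<lambda>t. \<Sum>k<N. ln_integrand (Suc k / N) t) X
      = (\<Sum>k<N. op_fc (ln_integrand (Suc k / N)) X)"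
    using cont by (intro op_fc_sum[OF sa sp compact_Icc]) simp
  finally show ?thesis .
qed

section \<open>Jensen's operator inequality for the logarithm\<close>

lemma op_lower_bound_sandwich_sum:
  assumes C: "\<And>j. j \<in> J \<Longrightarrow> op_selfadjoint (C j)" and CC: "(\<Sum>j\<in>J. C j o\<^sub>L C j) = id_blinfun"
    and X: "\<And>j. j \<in> J \<Longrightarrow> op_lower_bound (X j) a"
  shows "op_lower_bound (\<Sum>j\<in>J. (C j o\<^sub>L X j) o\<^sub>L C j) a"
  unfolding op_lower_bound_def
proof
  fix x
  have "a * (norm x)^2 = a * inner ((\<Sum>j\<in>J. C j o\<^sub>L C j) x) x"
    by (simp add: CC power2_norm_eq_inner)
  also have "\<dots> = (\<Sum>j\<in>J. a * (norm (C j x))^2)"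
    using C by (simp add: blinfun.sum_left inner_sum_left sum_distrib_left power2_norm_eq_inner
        inner_sandwich[where Y=id_blinfun, simplified])
  also have "\<dots> \<le> (\<Sum>j\<in>J. inner (X j (C j x)) (C j x))"
    using X by (intro sum_mono op_lower_boundD)
  also have "\<dots> = inner ((\<Sum>j\<in>J. (C j o\<^sub>L X j) o\<^sub>L C j) x) x"
    using C
    by (simp add: blinfun.sum_left inner_sum_left inner_sandwich del: blinfun_apply_blinfun_compose)
  finally show "a * (norm x)^2 \<le> inner ((\<Sum>j\<in>J. (C j o\<^sub>L X j) o\<^sub>L C j) x) x" .
qed

lemma inner_op_inv_shift:
  assumes sa: "op_selfadjoint Y" and inv: "op_invertible Y"
  shows "inner (Y (op_inv Y p - q)) (op_inv Y p - q)
    = inner (op_inv Y p) p - 2 * inner p q + inner (Y q) q"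
proof -
  have "inner (Y q) (op_inv Y p) = inner q p"
    using op_selfadjointD[OF sa, of q "op_inv Y p"] inv by simp
  then show ?thesis
    using inv by (simp add: blinfun.bilinear_simps inner_diff_left inner_diff_right inner_commute)
qed

text \<open>With \<open>Z = \<Sum> C\<^sub>j Y\<^sub>j C\<^sub>j\<close>,
  \<open>W = \<Sum> C\<^sub>j Y\<^sub>j\<^sup>-\<^sup>1 C\<^sub>j\<close> and \<open>v = Z\<^sup>-\<^sup>1 x\<close>, the slack \<open>\<langle>W x, x\<rangle> - \<langle>Z\<^sup>-\<^sup>1 x, x\<rangle>\<close>
  equals \<open>\<Sum> \<langle>Y\<^sub>j w\<^sub>j, w\<^sub>j\<rangle> \<ge> 0\<close> for \<open>w\<^sub>j = Y\<^sub>j\<^sup>-\<^sup>1 C\<^sub>j x - C\<^sub>j v\<close>.\<close>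

lemma op_inv_sandwich_sum_le:
  assumes C: "\<And>j. j \<in> J \<Longrightarrow> op_selfadjoint (C j)" and CC: "(\<Sum>j\<in>J. C j o\<^sub>L C j) = id_blinfun"
    and Y: "\<And>j. j \<in> J \<Longrightarrow> op_strictly_pos (Y j)"
    and Z: "op_invertible (\<Sum>j\<in>J. (C j o\<^sub>L Y j) o\<^sub>L C j)"
  shows "op_le (op_inv (\<Sum>j\<in>J. (C j o\<^sub>L Y j) o\<^sub>L C j)) (\<Sum>j\<in>J. (C j o\<^sub>L op_inv (Y j)) o\<^sub>L C j)"
    (is "op_le (op_inv ?Z) ?W")
proof -
  have saY: "op_selfadjoint (Y j)" and invY: "op_invertible (Y j)" and posY: "op_pos (Y j)"
    if "j \<in> J" for j
    using Y[OF that] by (simp_all add: op_strictly_pos_def op_pos_def)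
  have saZ: "op_selfadjoint ?Z"
    using C saY by (intro op_selfadjoint_sum op_selfadjoint_sandwich)
  have "op_selfadjoint (?W - op_inv ?Z)"
    using C saY invY saZ Z
    by (intro op_selfadjoint_diff op_selfadjoint_sum op_selfadjoint_sandwich op_selfadjoint_op_inv)
  moreover have "inner (op_inv ?Z x) x \<le> inner (?W x) x" for x
  proof -
    define v where "v = op_inv ?Z x"
    have "0 \<le> (\<Sum>j\<in>J. inner (Y j (op_inv (Y j) (C j x) - C j v)) (op_inv (Y j) (C j x) - C j v))"
      using posY by (intro sum_nonneg) (simp add: op_pos_def)
    also have "\<dots> = (\<Sum>j\<in>J. inner (((C j o\<^sub>L op_inv (Y j)) o\<^sub>L C j) x) x - 2 * inner (C j (C j x)) v
        + inner (((C j o\<^sub>L Y j) o\<^sub>L C j) v) v)"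
    proof (rule sum.cong)
      fix j assume j: "j \<in> J"
      show "inner (Y j (op_inv (Y j) (C j x) - C j v)) (op_inv (Y j) (C j x) - C j v)
          = inner (((C j o\<^sub>L op_inv (Y j)) o\<^sub>L C j) x) x - 2 * inner (C j (C j x)) v
            + inner (((C j o\<^sub>L Y j) o\<^sub>L C j) v) v"
        using inner_op_inv_shift[OF saY[OF j] invY[OF j], of "C j x" "C j v"]
          inner_sandwich[OF C[OF j], of "op_inv (Y j)" x x] inner_sandwich[OF C[OF j], of "Y j" v v]
          op_selfadjointD[OF C[OF j], of "C j x" v]
        by linarith
    qed simp
    also have "\<dots> = inner (?W x) x - 2 * inner (\<Sum>j\<in>J. C j (C j x)) v + inner (?Z v) v"
      by (simp add: sum.distrib sum_subtractf sum_distrib_left blinfun.sum_left inner_sum_left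
          del: blinfun_apply_blinfun_compose)
    also have "(\<Sum>j\<in>J. C j (C j x)) = x"
      using arg_cong[OF CC, of "\<lambda>F. F x"] by (simp add: blinfun.sum_left)
    also have "?Z v = x"
      using Z by (simp add: v_def)
    finally show ?thesis
      by (simp add: v_def inner_commute)
  qed
  ultimately show ?thesis
    by (simp add: op_le_iff)
qed

lemma op_strictly_pos_convex_combination_id:
  fixes X :: "'a::{real_inner,complete_space} \<Rightarrow>\<^sub>L 'a"
  assumes sa: "op_selfadjoint X" and lb: "op_lower_bound X a" and a: "0 < a" and u: "0 \<le> u" "u \<le> 1"
  shows "op_strictly_pos (id_blinfun + u *\<^sub>R (X - id_blinfun))"
  unfolding op_strictly_pos_iff_lower_bound
proof (intro conjI exI)
  show "op_selfadjoint (id_blinfun + u *\<^sub>R (X - id_blinfun))"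
    using sa by (intro op_selfadjoint_add op_selfadjoint_scaleR op_selfadjoint_diff) simp_all
  show "0 < (1 - u) + u * a"
    using a u by (cases "u = 0") (auto intro: add_nonneg_pos)
  show "op_lower_bound (id_blinfun + u *\<^sub>R (X - id_blinfun)) ((1 - u) + u * a)"
    unfolding op_lower_bound_def
  proof
    fix x
    have "((1 - u) + u * a) * (norm x)^2 \<le> (1 - u) * (norm x)^2 + u * inner (X x) x"
      using mult_left_mono[OF op_lower_boundD[OF lb, of x] u(1)] by (simp add: algebra_simps)
    also have "\<dots> = inner ((id_blinfun + u *\<^sub>R (X - id_blinfun)) x) x"
      by (simp add: blinfun.bilinear_simps inner_add_left inner_diff_left power2_norm_eq_inner
          algebra_simps)
    finally show "((1 - u) + u * a) * (norm x)^2
        \<le> inner ((id_blinfun + u *\<^sub>R (X - id_blinfun)) x) x" .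
  qed
qed

lemma sandwich_sum_convex_combination_id:
  assumes CC: "(\<Sum>j\<in>J. C j o\<^sub>L C j) = id_blinfun"
  shows "(\<Sum>j\<in>J. (C j o\<^sub>L (id_blinfun + u *\<^sub>R (X j - id_blinfun))) o\<^sub>L C j)
    = id_blinfun + u *\<^sub>R ((\<Sum>j\<in>J. (C j o\<^sub>L X j) o\<^sub>L C j) - id_blinfun)"
proof -
  have "(C j o\<^sub>L (id_blinfun + u *\<^sub>R (X j - id_blinfun))) o\<^sub>L C j
      = (C j o\<^sub>L C j) + u *\<^sub>R (((C j o\<^sub>L X j) o\<^sub>L C j) - (C j o\<^sub>L C j))" for j
    by (simp add: blinfun_compose.add_left blinfun_compose.add_right blinfun_compose.scaleR_left
        blinfun_compose.scaleR_right blinfun_compose.diff_left blinfun_compose.diff_right)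
  then show ?thesis
    by (simp add: CC sum.distrib sum_subtractf flip: scaleR_sum_right)
qed

text \<open>Since \<open>ln_integrand u X = (1 - (1 + u (X - 1))\<^sup>-\<^sup>1) / u\<close>, this is \<open>op_inv_sandwich_sum_le\<close>
  applied to \<open>Y\<^sub>j = 1 + u (X\<^sub>j - 1)\<close>.\<close>

lemma op_jensen_ln_integrand:
  fixes C X :: "'i \<Rightarrow> 'a::{real_inner,complete_space} \<Rightarrow>\<^sub>L 'a"
  assumes C: "\<And>j. j \<in> J \<Longrightarrow> op_selfadjoint (C j)" and CC: "(\<Sum>j\<in>J. C j o\<^sub>L C j) = id_blinfun"
    and X: "\<And>j. j \<in> J \<Longrightarrow> op_selfadjoint (X j)" "\<And>j. j \<in> J \<Longrightarrow> op_lower_bound (X j) a"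
    and a: "0 < a" and u: "0 < u" "u \<le> 1"
  shows "op_le (\<Sum>j\<in>J. (C j o\<^sub>L op_fc (ln_integrand u) (X j)) o\<^sub>L C j)
    (op_fc (ln_integrand u) (\<Sum>j\<in>J. (C j o\<^sub>L X j) o\<^sub>L C j))"
proof -
  define W where "W = (\<Sum>j\<in>J. (C j o\<^sub>L X j) o\<^sub>L C j)"
  define Y where "Y T = id_blinfun + u *\<^sub>R (T - id_blinfun)" for T :: "'a \<Rightarrow>\<^sub>L 'a"
  have W: "op_selfadjoint W" "op_lower_bound W a"
    using C X CC unfolding W_def
    by (auto intro: op_selfadjoint_sum op_selfadjoint_sandwich op_lower_bound_sandwich_sum)
  have fc: "op_invertible (Y T)"
    "op_fc (ln_integrand u) T = (1 / u) *\<^sub>R (id_blinfun - op_inv (Y T))"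
    if "op_selfadjoint T" "op_lower_bound T a" for T
    using op_fc_ln_integrand[OF that(1) op_spectrum_subset_lower_bound[OF that] a u]
    by (simp_all add: Y_def)
  have "op_strictly_pos (Y (X j))" if "j \<in> J" for j
    unfolding Y_def using X[OF that] a u by (intro op_strictly_pos_convex_combination_id) simp_all
  moreover have "(\<Sum>j\<in>J. (C j o\<^sub>L Y (X j)) o\<^sub>L C j) = Y W"
    unfolding Y_def W_def by (rule sandwich_sum_convex_combination_id[OF CC])
  ultimately have "op_le (op_inv (Y W)) (\<Sum>j\<in>J. (C j o\<^sub>L op_inv (Y (X j))) o\<^sub>L C j)"
    using op_inv_sandwich_sum_le[OF C CC, of "\<lambda>j. Y (X j)"] fc(1)[OF W] by simp
  then have le: "op_le ((1 / u) *\<^sub>R (id_blinfun + - (\<Sum>j\<in>J. (C j o\<^sub>L op_inv (Y (X j))) o\<^sub>L C j)))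
      ((1 / u) *\<^sub>R (id_blinfun + - op_inv (Y W)))"
    using u by (intro op_le_scaleR op_le_add op_le_refl op_le_uminus) simp_all
  have "(\<Sum>j\<in>J. (C j o\<^sub>L op_fc (ln_integrand u) (X j)) o\<^sub>L C j)
      = (\<Sum>j\<in>J. (1 / u) *\<^sub>R ((C j o\<^sub>L C j) - ((C j o\<^sub>L op_inv (Y (X j))) o\<^sub>L C j)))"
    using X by (intro sum.cong) (simp_all add: fc blinfun_compose.scaleR_left
        blinfun_compose.scaleR_right blinfun_compose.diff_left blinfun_compose.diff_right)
  also have "\<dots> = (1 / u) *\<^sub>R ((\<Sum>j\<in>J. C j o\<^sub>L C j) - (\<Sum>j\<in>J. (C j o\<^sub>L op_inv (Y (X j))) o\<^sub>L C j))"
    by (simp add: scaleR_diff_right sum_subtractf scaleR_sum_right)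
  finally show ?thesis
    using le fc(2)[OF W] by (simp add: W_def CC)
qed

lemma op_fc_ln_riemann_sum_tendsto:
  fixes T :: "'a::{real_inner,complete_space} \<Rightarrow>\<^sub>L 'a"
  assumes sa: "op_selfadjoint T" and lb: "op_lower_bound T a" and a: "0 < a"
  shows "(\<lambda>N. op_fc (ln_riemann_sum N) T) \<longlonglongrightarrow> op_fc ln T"
  using a
  by (intro op_fc_tendsto[OF sa op_spectrum_subset_lower_bound[OF sa lb] compact_Icc]
      continuous_on_ln_riemann_sum uniform_limit_ln_riemann_sum continuous_intros) auto

lemma op_jensen_ln_lower_bound:
  fixes C X :: "'i \<Rightarrow> 'a::{real_inner,complete_space} \<Rightarrow>\<^sub>L 'a"
  assumes C: "\<And>j. j \<in> J \<Longrightarrow> op_selfadjoint (C j)" and CC: "(\<Sum>j\<in>J. C j o\<^sub>L C j) = id_blinfun"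
    and X: "\<And>j. j \<in> J \<Longrightarrow> op_selfadjoint (X j)" "\<And>j. j \<in> J \<Longrightarrow> op_lower_bound (X j) a"
    and a: "0 < a"
  shows "op_le (\<Sum>j\<in>J. (C j o\<^sub>L op_fc ln (X j)) o\<^sub>L C j) (op_fc ln (\<Sum>j\<in>J. (C j o\<^sub>L X j) o\<^sub>L C j))"
proof (rule op_le_limit)
  define W where "W = (\<Sum>j\<in>J. (C j o\<^sub>L X j) o\<^sub>L C j)"
  have W: "op_selfadjoint W" "op_lower_bound W a"
    using C X CC unfolding W_def
    by (auto intro: op_selfadjoint_sum op_selfadjoint_sandwich op_lower_bound_sandwich_sum)
  show "(\<lambda>N. \<Sum>j\<in>J. (C j o\<^sub>L op_fc (ln_riemann_sum N) (X j)) o\<^sub>L C j)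
      \<longlonglongrightarrow> (\<Sum>j\<in>J. (C j o\<^sub>L op_fc ln (X j)) o\<^sub>L C j)"
    using X a
    by (intro tendsto_sum blinfun_compose.tendsto tendsto_const op_fc_ln_riemann_sum_tendsto)
  show "(\<lambda>N. op_fc (ln_riemann_sum N) (\<Sum>j\<in>J. (C j o\<^sub>L X j) o\<^sub>L C j))
      \<longlonglongrightarrow> op_fc ln (\<Sum>j\<in>J. (C j o\<^sub>L X j) o\<^sub>L C j)"
    using op_fc_ln_riemann_sum_tendsto[OF W a] by (simp add: W_def)
  fix N
  have "op_fc (ln_riemann_sum N) (X j) = (1 / N) *\<^sub>R (\<Sum>k<N. op_fc (ln_integrand (Suc k / N)) (X j))"
    if "j \<in> J" for j
    using op_fc_ln_riemann_sum[OF X(1) op_spectrum_subset_lower_bound[OF X] a] that by simp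
  then have "(\<Sum>j\<in>J. (C j o\<^sub>L op_fc (ln_riemann_sum N) (X j)) o\<^sub>L C j)
      = (1 / N) *\<^sub>R (\<Sum>k<N. \<Sum>j\<in>J. (C j o\<^sub>L op_fc (ln_integrand (Suc k / N)) (X j)) o\<^sub>L C j)"
    by (simp add: blinfun_compose.scaleR_left
        blinfun_compose.scaleR_right blinfun_compose.sum_left blinfun_compose.sum_right
        scaleR_sum_right sum.swap[of _ "{..<N}"] cong: sum.cong)
  also have "op_le \<dots> ((1 / N) *\<^sub>R (\<Sum>k<N. op_fc (ln_integrand (Suc k / N)) W))"
    using C CC X a unfolding W_def
    by (intro op_le_scaleR op_le_sum op_jensen_ln_integrand) (auto simp: field_simps)
  also have "(1 / N) *\<^sub>R (\<Sum>k<N. op_fc (ln_integrand (Suc k / N)) W) = op_fc (ln_riemann_sum N) W"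
    using op_fc_ln_riemann_sum[OF W(1) op_spectrum_subset_lower_bound[OF W] a] by simp
  finally show "op_le (\<Sum>j\<in>J. (C j o\<^sub>L op_fc (ln_riemann_sum N) (X j)) o\<^sub>L C j)
      (op_fc (ln_riemann_sum N) (\<Sum>j\<in>J. (C j o\<^sub>L X j) o\<^sub>L C j))"
    by (simp add: W_def)
qed

lemma op_strictly_pos_common_lower_bound:
  fixes X :: "'i \<Rightarrow> 'a::{real_inner,complete_space} \<Rightarrow>\<^sub>L 'a"
  assumes J: "finite J" and X: "\<And>j. j \<in> J \<Longrightarrow> op_strictly_pos (X j)"
  obtains a where "0 < a" "\<And>j. j \<in> J \<Longrightarrow> op_lower_bound (X j) a"
proof -
  have "\<forall>j\<in>J. \<exists>c. 0 < c \<and> op_lower_bound (X j) c"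
    using X by (simp add: op_strictly_pos_iff_lower_bound)
  then obtain b where b: "\<forall>j\<in>J. 0 < b j \<and> op_lower_bound (X j) (b j)"
    by (rule bchoice[elim_format]) blast
  define a where "a = Min (insert 1 (b ` J))"
  have "0 < a"
    using J b by (simp add: a_def)
  moreover have "op_lower_bound (X j) a" if "j \<in> J" for j
    using b J that by (auto simp: a_def intro: op_lower_bound_mono)
  ultimately show thesis
    by (rule that)
qed

lemma op_jensen_ln:
  fixes C X :: "'i \<Rightarrow> 'a::{real_inner,complete_space} \<Rightarrow>\<^sub>L 'a"
  assumes J: "finite J" and C: "\<And>j. j \<in> J \<Longrightarrow> op_selfadjoint (C j)"
    and CC: "(\<Sum>j\<in>J. C j o\<^sub>L C j) = id_blinfun" and X: "\<And>j. j \<in> J \<Longrightarrow> op_strictly_pos (X j)"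
  shows "op_le (\<Sum>j\<in>J. (C j o\<^sub>L op_fc ln (X j)) o\<^sub>L C j) (op_fc ln (\<Sum>j\<in>J. (C j o\<^sub>L X j) o\<^sub>L C j))"
proof -
  obtain a where "0 < a" "\<And>j. j \<in> J \<Longrightarrow> op_lower_bound (X j) a"
    using op_strictly_pos_common_lower_bound[of J X] J X by auto
  then show ?thesis
    using X by (intro op_jensen_ln_lower_bound[OF C CC]) (auto simp: op_strictly_pos_selfadjoint)
qed

lemma op_sqrt_sandwich:
  fixes A B :: "'a::{real_inner,complete_space} \<Rightarrow>\<^sub>L 'a"
  assumes A: "op_strictly_pos A" and B: "op_strictly_pos B"
  defines "S \<equiv> op_fc (\<lambda>t. t powr (1/2)) A" and "R \<equiv> op_fc (\<lambda>t. t powr (-1/2)) A"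
  shows "op_selfadjoint S" "S o\<^sub>L S = A" "op_strictly_pos ((R o\<^sub>L B) o\<^sub>L R)"
    "(S o\<^sub>L ((R o\<^sub>L B) o\<^sub>L R)) o\<^sub>L S = B"
    "(S o\<^sub>L op_inv ((R o\<^sub>L B) o\<^sub>L R)) o\<^sub>L S = (A o\<^sub>L op_inv B) o\<^sub>L A"
proof -
  have SS: "S o\<^sub>L S = A" and SR: "S o\<^sub>L R = id_blinfun" and RS: "R o\<^sub>L S = id_blinfun"
    using op_fc_powr(2-4)[OF A] by (simp_all add: S_def R_def)
  have SSx: "S (S x) = A x" and SRx: "S (R x) = x" and RSx: "R (S x) = x" for x
    using SS SR RS by (metis blinfun_apply_blinfun_compose blinfun_apply_id_blinfun)+
  show "op_selfadjoint S" "S o\<^sub>L S = A"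
    using op_fc_powr(1)[OF A] SS by (simp_all add: S_def)
  have "op_selfadjoint R" "op_invertible R"
    using op_fc_powr(1)[OF A] op_invertibleI[OF SR RS] by (simp_all add: R_def)
  then show "op_strictly_pos ((R o\<^sub>L B) o\<^sub>L R)"
    using op_strictly_pos_sandwich[OF B] by blast
  show "(S o\<^sub>L ((R o\<^sub>L B) o\<^sub>L R)) o\<^sub>L S = B"
    by (rule blinfun_eqI) (simp add: SRx RSx)
  have "op_invertible B"
    using B by (simp add: op_strictly_pos_def)
  then have "op_inv ((R o\<^sub>L B) o\<^sub>L R) = (S o\<^sub>L op_inv B) o\<^sub>L S"
    by (rule op_inv_sandwich[OF _ SR RS])
  then show "(S o\<^sub>L op_inv ((R o\<^sub>L B) o\<^sub>L R)) o\<^sub>L S = (A o\<^sub>L op_inv B) o\<^sub>L A"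
    by (intro blinfun_eqI) (simp add: SSx)
qed

theorem corollary1:
  fixes A B :: "nat \<Rightarrow> ('a::{real_inner, complete_space} \<Rightarrow>\<^sub>L 'a)" and n :: nat
  assumes "\<forall>j<n. op_strictly_pos (A j)"
    and "\<forall>j<n. op_strictly_pos (B j)"
    and "(\<Sum>j<n. A j) = id_blinfun"
    and "(\<Sum>j<n. B j) = id_blinfun"
  shows "op_le (\<Sum>j<n. op_fc (\<lambda>t. t powr (1/2)) (A j) o\<^sub>L
              (op_fc ln ((op_fc (\<lambda>t. t powr (-1/2)) (A j) o\<^sub>L B j) o\<^sub>L op_fc (\<lambda>t. t powr (-1/2)) (A j))
               o\<^sub>L op_fc (\<lambda>t. t powr (1/2)) (A j))) 0
       \<and> op_le (- op_fc ln (\<Sum>j<n. (A j o\<^sub>L op_inv (B j)) o\<^sub>L A j))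
              (\<Sum>j<n. op_fc (\<lambda>t. t powr (1/2)) (A j) o\<^sub>L
              (op_fc ln ((op_fc (\<lambda>t. t powr (-1/2)) (A j) o\<^sub>L B j) o\<^sub>L op_fc (\<lambda>t. t powr (-1/2)) (A j))
               o\<^sub>L op_fc (\<lambda>t. t powr (1/2)) (A j)))"
proof -
  define S where "S j = op_fc (\<lambda>t. t powr (1/2)) (A j)" for j
  define R where "R j = op_fc (\<lambda>t. t powr (-1/2)) (A j)" for j
  define X where "X j = (R j o\<^sub>L B j) o\<^sub>L R j" for j
  define L where "L = (\<Sum>j<n. (S j o\<^sub>L op_fc ln (X j)) o\<^sub>L S j)"
  have sqrt: "op_selfadjoint (S j)" "S j o\<^sub>L S j = A j" "op_strictly_pos (X j)"
    "(S j o\<^sub>L X j) o\<^sub>L S j = B j" "(S j o\<^sub>L op_inv (X j)) o\<^sub>L S j = (A j o\<^sub>L op_inv (B j)) o\<^sub>L A j"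
    if "j < n" for j
    using op_sqrt_sandwich[of "A j" "B j"] assms(1,2) that by (simp_all add: S_def R_def X_def)
  have SS: "(\<Sum>j<n. S j o\<^sub>L S j) = id_blinfun"
    using sqrt(2) assms(3) by simp
  have "op_le L (op_fc ln (\<Sum>j<n. (S j o\<^sub>L X j) o\<^sub>L S j))"
    unfolding L_def using sqrt SS by (intro op_jensen_ln) simp_all
  then have upper: "op_le L 0"
    using sqrt(4) assms(4) by (simp add: op_fc_ln_id)
  have "op_le (\<Sum>j<n. (S j o\<^sub>L op_fc ln (op_inv (X j))) o\<^sub>L S j)
      (op_fc ln (\<Sum>j<n. (S j o\<^sub>L op_inv (X j)) o\<^sub>L S j))"
    using sqrt SS by (intro op_jensen_ln) (simp_all add: op_strictly_pos_op_inv)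
  then have "op_le (- L) (op_fc ln (\<Sum>j<n. (A j o\<^sub>L op_inv (B j)) o\<^sub>L A j))"
    using sqrt(3,5) by (simp add: L_def op_fc_ln_op_inv blinfun_compose.minus_left
        blinfun_compose.minus_right sum_negf)
  with upper have "op_le L 0 \<and> op_le (- op_fc ln (\<Sum>j<n. (A j o\<^sub>L op_inv (B j)) o\<^sub>L A j)) L"
    using op_le_uminus by fastforce
  then show ?thesis
    by (simp add: L_def S_def R_def X_def blinfun_compose_assoc)
qed

end
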